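(* Let $\mathbb X\subset\mathbb P^2$ be any linear configuration of type $(n_1,\dots,n_r)$ and let $\mathbb Z$ be its first infinitesimal neighborhood. Then the regularity of $\mathbb Z$ is $2n_r$. In particular, all first infinitesimal neighborhoods of linear configurations of the same type have the same regularity.
   Context: $k$ is an infinite field of characteristic zero, $R=k[x_0,x_1,x_2]$. A linear configuration of type $(n_1,\dots,n_r)$, $0<n_1<\cdots<n_r$, is $\bigcup_{i=1}^r\mathbb X_i$ with $L_1,\dots,L_r$ distinct lines, $\mathbb X_i$ a set of $n_i$ points on $L_i$, and no point of $\mathbb X_i$ on $L_j$ for $j\ne i$. The first infinitesimal neighborhood of $\{P_1,\dots,P_s\}$ (prime ideals $\wp_i$) is defined by $\wp_1^2\cap\cdots\cap\wp_s^2$. The regularity of a zero-dimensional scheme with saturated ideal $I$ is $\min\{t:h^1(\mathcal I(t-1))=0\}$, equivalently the least $t$ with $\Delta h(t)=0$ where $h(t)=\dim_k(R/I)_t$. *)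

theory Defs
  imports Complex_Main "HOL-Library.Function_Algebras"
begin

text \<open>Forms in k[x0,x1,x2] are coefficient functions on exponent triples (a,b,c),
  standing for x0^a x1^b x2^c. Points of P^2 are given by nonzero coordinate triples,
  lines by nonzero coefficient triples (u,v,w) of the linear form u x0 + v x1 + w x2.\<close>

type_synonym expo = "nat \<times> nat \<times> nat"

fun edeg :: "expo \<Rightarrow> nat" where
  "edeg (a, b, c) = a + b + c"

definition scalef :: "'a::field \<Rightarrow> (expo \<Rightarrow> 'a) \<Rightarrow> (expo \<Rightarrow> 'a)" where
  "scalef c f = (\<lambda>m. c * f m)"

definition hom_forms :: "nat \<Rightarrow> (expo \<Rightarrow> 'a::zero) set" where
  "hom_forms t = {f. \<forall>m. f m \<noteq> 0 \<longrightarrow> edeg m = t}"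

fun pmul :: "(expo \<Rightarrow> 'a::field) \<Rightarrow> (expo \<Rightarrow> 'a) \<Rightarrow> expo \<Rightarrow> 'a" where
  "pmul f g (a, b, c) =
     (\<Sum>i\<le>a. \<Sum>j\<le>b. \<Sum>l\<le>c. f (i, j, l) * g (a - i, b - j, c - l))"

definition linform :: "'a::zero \<times> 'a \<times> 'a \<Rightarrow> expo \<Rightarrow> 'a" where
  "linform l m = (case l of (u, v, w) \<Rightarrow>
     if m = (1,0,0) then u else if m = (0,1,0) then v else if m = (0,0,1) then w else 0)"

fun lin_eval :: "'a::field \<times> 'a \<times> 'a \<Rightarrow> 'a \<times> 'a \<times> 'a \<Rightarrow> 'a" where
  "lin_eval (u, v, w) (p0, p1, p2) = u * p0 + v * p1 + w * p2"

definition on_line :: "'a::field \<times> 'a \<times> 'a \<Rightarrow> 'a \<times> 'a \<times> 'a \<Rightarrow> bool" where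
  "on_line P L \<longleftrightarrow> lin_eval L P = 0"

definition proportional :: "'a::field \<times> 'a \<times> 'a \<Rightarrow> 'a \<times> 'a \<times> 'a \<Rightarrow> bool" where
  "proportional p q \<longleftrightarrow> (\<exists>c. c \<noteq> 0 \<and>
      q = (c * fst p, c * fst (snd p), c * snd (snd p)))"

definition nonzero3 :: "'a::zero \<times> 'a \<times> 'a \<Rightarrow> bool" where
  "nonzero3 p \<longleftrightarrow> p \<noteq> (0, 0, 0)"

text \<open>Degree-t part of \<wp>_P^2, where \<wp>_P is the homogeneous prime ideal of P,
  generated by the linear forms vanishing at P; so (\<wp>_P^2)_t is spanned by the
  products l1 * l2 * g with l1, l2 linear forms vanishing at P and g a form of degree t-2.\<close>
definition sq_point_ideal_deg :: "'a::field \<times> 'a \<times> 'a \<Rightarrow> nat \<Rightarrow> (expo \<Rightarrow> 'a) set" where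
  "sq_point_ideal_deg P t = module.span scalef
     {pmul (pmul (linform l1) (linform l2)) g | l1 l2 g.
        2 \<le> t \<and> lin_eval l1 P = 0 \<and> lin_eval l2 P = 0 \<and> g \<in> hom_forms (t - 2)}"

text \<open>Degree-t part of the ideal \<wp>_1^2 \<inter> ... \<inter> \<wp>_s^2 of the first infinitesimal
  neighbourhood of the finite point set X.\<close>
definition fin_ideal_deg :: "('a::field \<times> 'a \<times> 'a) set \<Rightarrow> nat \<Rightarrow> (expo \<Rightarrow> 'a) set" where
  "fin_ideal_deg X t = hom_forms t \<inter> (\<Inter>P\<in>X. sq_point_ideal_deg P t)"

definition hilb_fin :: "('a::field \<times> 'a \<times> 'a) set \<Rightarrow> nat \<Rightarrow> int" where
  "hilb_fin X t = int (vector_space.dim (scalef :: 'a \<Rightarrow> _) (hom_forms t))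
                 - int (vector_space.dim (scalef :: 'a \<Rightarrow> _) (fin_ideal_deg X t))"

text \<open>First difference \<Delta>h(t) = h(t) - h(t-1), with h(-1) = 0.\<close>
definition dhilb_fin :: "('a::field \<times> 'a \<times> 'a) set \<Rightarrow> nat \<Rightarrow> int" where
  "dhilb_fin X t = (if t = 0 then hilb_fin X 0 else hilb_fin X t - hilb_fin X (t - 1))"

definition reg_fin :: "('a::field \<times> 'a \<times> 'a) set \<Rightarrow> nat" where
  "reg_fin X = (LEAST t. dhilb_fin X t = 0)"

text \<open>Linear configuration of type (n_0,...,n_{r-1}) (0-indexed): lines L i, point sets X i.\<close>
definition linear_configuration ::
  "nat \<Rightarrow> (nat \<Rightarrow> nat) \<Rightarrow> (nat \<Rightarrow> 'a::field \<times> 'a \<times> 'a) \<Rightarrow> (nat \<Rightarrow> ('a \<times> 'a \<times> 'a) set) \<Rightarrow> bool" where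
  "linear_configuration r n L X \<longleftrightarrow>
     1 \<le> r \<and> 0 < n 0 \<and> (\<forall>i. Suc i < r \<longrightarrow> n i < n (Suc i)) \<and>
     (\<forall>i<r. nonzero3 (L i)) \<and>
     (\<forall>i<r. \<forall>j<r. i \<noteq> j \<longrightarrow> \<not> proportional (L i) (L j)) \<and>
     (\<forall>i<r. finite (X i) \<and> card (X i) = n i) \<and>
     (\<forall>i<r. \<forall>P\<in>X i. nonzero3 P \<and> on_line P (L i)) \<and>
     (\<forall>i<r. \<forall>P\<in>X i. \<forall>Q\<in>X i. P \<noteq> Q \<longrightarrow> \<not> proportional P Q) \<and>
     (\<forall>i<r. \<forall>j<r. i \<noteq> j \<longrightarrow> (\<forall>P\<in>X i. \<not> on_line P (L j)))"

end

theory Submission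
  imports Defs "HOL-Computational_Algebra.Polynomial"
begin

text \<open>In characteristic zero, the degree-\<open>t\<close> part \<open>I\<^sub>t\<close> of the ideal of the first infinitesimal
  neighbourhood consists of the forms of degree \<open>t\<close> singular at every point. Each point imposes at
  most three conditions, so \<open>h(t) \<le> 3 |X|\<close> always.

  Conversely, add the lines in order of increasing \<open>n\<^sub>i\<close>. A form of degree \<open>< 2 n\<^sub>i\<close> singular at
  the \<open>n\<^sub>i\<close> points on \<open>L\<^sub>i\<close> restricts to \<open>L\<^sub>i\<close> with \<open>n\<^sub>i\<close> double roots, hence is divisible by \<open>L\<^sub>i\<close>;
  dividing by \<open>L\<^sub>i\<close> and restricting the quotient to \<open>L\<^sub>i\<close> shows by induction that the points impose
  independent conditions from degree \<open>2 n\<^sub>i - 1\<close> on. Hence \<open>h(t) = 3 |X|\<close> for \<open>t \<ge> 2 n\<^sub>r - 1\<close>, and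
  \<open>\<Delta>h(2 n\<^sub>r) = 0\<close>. For \<open>0 < t < 2 n\<^sub>r\<close> every form in \<open>I\<^sub>t\<close> is divisible by \<open>L\<^sub>r\<close>, which bounds
  \<open>dim I\<^sub>t - dim I\<^sub>t\<^sub>-\<^sub>1\<close> by \<open>t\<close>, while \<open>dim R\<^sub>t - dim R\<^sub>t\<^sub>-\<^sub>1 = t + 1\<close>; so \<open>\<Delta>h(t) > 0\<close>.\<close>

section \<open>Forms as trivariate polynomials\<close>

global_interpretation vs: vector_space "scalef :: 'a::field \<Rightarrow> (expo \<Rightarrow> 'a) \<Rightarrow> _"
  by unfold_locales (auto simp: scalef_def fun_eq_iff algebra_simps)

lemma scalef_apply: "scalef c f m = c * f m"
  by (simp add: scalef_def)

definition finite_supp :: "(expo \<Rightarrow> 'a::zero) \<Rightarrow> bool" where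
  "finite_supp f \<longleftrightarrow> finite {m. f m \<noteq> 0}"

text \<open>A coefficient function with finite support is the same thing as an element of
  \<open>'a poly poly poly\<close>, with \<open>x0, x1, x2\<close> the innermost, middle and outermost variable.
  Transporting \<^const>\<open>pmul\<close> along this bijection reduces its ring laws, and the
  multiplicativity of evaluation, to those of polynomials.\<close>

type_synonym 'a poly3 = "'a poly poly poly"

definition form_of :: "'a::zero poly3 \<Rightarrow> expo \<Rightarrow> 'a" where
  "form_of p m = (case m of (a, b, c) \<Rightarrow> coeff (coeff (coeff p c) b) a)"

definition monom3 :: "expo \<Rightarrow> 'a::zero \<Rightarrow> 'a poly3" where
  "monom3 m v = (case m of (a, b, c) \<Rightarrow> monom (monom (monom v a) b) c)"

definition poly3_of :: "(expo \<Rightarrow> 'a::comm_monoid_add) \<Rightarrow> 'a poly3" where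
  "poly3_of f = (\<Sum>m\<in>{m. f m \<noteq> 0}. monom3 m (f m))"

lemma form_of_mult: "form_of (p * q) = pmul (form_of p) (form_of q)"
proof (rule ext, clarify)
  fix a b c
  let ?F = "\<lambda>i j l. coeff (coeff (coeff p l) j) i * coeff (coeff (coeff q (c - l)) (b - j)) (a - i)"
  have "form_of (p * q) (a, b, c) = (\<Sum>l\<le>c. \<Sum>j\<le>b. \<Sum>i\<le>a. ?F i j l)"
    by (simp add: form_of_def coeff_mult coeff_sum)
  also have "\<dots> = (\<Sum>l\<le>c. \<Sum>i\<le>a. \<Sum>j\<le>b. ?F i j l)"
    by (rule sum.cong[OF refl], rule sum.swap)
  also have "\<dots> = (\<Sum>i\<le>a. \<Sum>l\<le>c. \<Sum>j\<le>b. ?F i j l)"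
    by (rule sum.swap)
  also have "\<dots> = (\<Sum>i\<le>a. \<Sum>j\<le>b. \<Sum>l\<le>c. ?F i j l)"
    by (rule sum.cong[OF refl], rule sum.swap)
  finally show "form_of (p * q) (a, b, c) = pmul (form_of p) (form_of q) (a, b, c)"
    by (simp add: form_of_def)
qed

lemma form_of_monom3: "form_of (monom3 m v) m' = (if m = m' then v else 0)"
  by (cases m; cases m') (simp add: form_of_def monom3_def coeff_monom)

lemma form_of_sum: "form_of (\<Sum>x\<in>A. p x) m = (\<Sum>x\<in>A. form_of (p x) m)"
  by (cases m) (simp add: form_of_def coeff_sum)

lemma form_of_add: "form_of (p + q) = form_of p + form_of q"
  by (rule ext) (simp add: form_of_def split: prod.splits)

lemma form_of_smult_const: "form_of (smult [:[:c:]:] p) = scalef c (form_of p)"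
  by (rule ext) (simp add: form_of_def scalef_apply split: prod.splits)

lemma form_of_poly3_of: "finite_supp f \<Longrightarrow> form_of (poly3_of f) = f"
proof (rule ext)
  fix m assume "finite_supp f"
  have "form_of (poly3_of f) m = (\<Sum>x\<in>{m. f m \<noteq> 0}. if x = m then f x else 0)"
    by (simp add: poly3_of_def form_of_sum form_of_monom3)
  also have "\<dots> = f m"
    using \<open>finite_supp f\<close> by (simp add: finite_supp_def sum.delta')
  finally show "form_of (poly3_of f) m = f m" .
qed

lemma form_of_inject: "form_of p = form_of q \<Longrightarrow> p = q"
proof (rule poly_eqI)+
  fix c b a
  assume "form_of p = form_of q"
  then have "form_of p (a, b, c) = form_of q (a, b, c)" by simp
  then show "coeff (coeff (coeff p c) b) a = coeff (coeff (coeff q c) b) a"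
    by (simp add: form_of_def)
qed

lemma poly3_of_inject: "finite_supp f \<Longrightarrow> finite_supp g \<Longrightarrow> poly3_of f = poly3_of g \<Longrightarrow> f = g"
  by (metis form_of_poly3_of)

lemma finite_supp_add:
  "finite_supp f \<Longrightarrow> finite_supp g \<Longrightarrow> finite_supp (f + (g :: expo \<Rightarrow> 'a::comm_monoid_add))"
  unfolding finite_supp_def
  by (rule finite_subset[of _ "{m. f m \<noteq> 0} \<union> {m. g m \<noteq> 0}"]) auto

lemma finite_supp_scalef: "finite_supp f \<Longrightarrow> finite_supp (scalef c f)"
  unfolding finite_supp_def by (rule finite_subset[of _ "{m. f m \<noteq> 0}"]) (auto simp: scalef_apply)

lemma finite_supp_zero [simp]: "finite_supp 0"
  by (simp add: finite_supp_def)

lemma finite_supp_sum: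
  "(\<And>x. x \<in> S \<Longrightarrow> finite_supp (g x)) \<Longrightarrow> finite_supp (\<Sum>x\<in>S. g x :: expo \<Rightarrow> 'a::comm_monoid_add)"
proof (induction S rule: infinite_finite_induct)
  case (insert x F)
  then show ?case by (simp only: sum.insert[OF insert(1,2)]) (intro finite_supp_add; auto)
qed simp_all

lemma finite_supp_pmul:
  assumes "finite_supp f" "finite_supp g"
  shows "finite_supp (pmul f g)"
proof -
  let ?add = "\<lambda>((i, j, l), (i', j', l')). (i + i', j + j', l + l')"
  have "{m. pmul f g m \<noteq> 0} \<subseteq> ?add ` ({m. f m \<noteq> 0} \<times> {m. g m \<noteq> 0})"
  proof clarify
    fix a b c assume "pmul f g (a, b, c) \<noteq> 0"
    then obtain i j l where "i \<le> a" "j \<le> b" "l \<le> c" "f (i, j, l) * g (a - i, b - j, c - l) \<noteq> 0"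
      by (auto elim!: sum.not_neutral_contains_not_neutral)
    then show "(a, b, c) \<in> ?add ` ({m. f m \<noteq> 0} \<times> {m. g m \<noteq> 0})"
      by (intro image_eqI[of _ _ "((i, j, l), (a - i, b - j, c - l))"]) auto
  qed
  then show ?thesis
    using assms unfolding finite_supp_def by (meson finite_SigmaI finite_imageI finite_subset)
qed

lemma poly3_of_pmul: "finite_supp f \<Longrightarrow> finite_supp g \<Longrightarrow> poly3_of (pmul f g) = poly3_of f * poly3_of g"
  by (rule form_of_inject) (simp add: form_of_poly3_of form_of_mult finite_supp_pmul)

lemma poly3_of_add: "finite_supp f \<Longrightarrow> finite_supp g \<Longrightarrow> poly3_of (f + g) = poly3_of f + poly3_of g"
  by (rule form_of_inject) (simp add: form_of_poly3_of form_of_add finite_supp_add)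

lemma poly3_of_scalef: "finite_supp f \<Longrightarrow> poly3_of (scalef c f) = smult [:[:c:]:] (poly3_of f)"
  by (rule form_of_inject) (simp add: form_of_poly3_of form_of_smult_const finite_supp_scalef)

lemma pmul_assoc:
  "finite_supp f \<Longrightarrow> finite_supp g \<Longrightarrow> finite_supp h \<Longrightarrow> pmul (pmul f g) h = pmul f (pmul g h)"
  by (rule poly3_of_inject) (auto simp: finite_supp_pmul poly3_of_pmul mult.assoc)

definition monom_val :: "expo \<Rightarrow> 'a::comm_semiring_1 \<times> 'a \<times> 'a \<Rightarrow> 'a" where
  "monom_val m P = (case m of (a, b, c) \<Rightarrow> case P of (p0, p1, p2) \<Rightarrow> p0 ^ a * p1 ^ b * p2 ^ c)"

definition eval_form :: "(expo \<Rightarrow> 'a::comm_semiring_1) \<Rightarrow> 'a \<times> 'a \<times> 'a \<Rightarrow> 'a" where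
  "eval_form f P = (\<Sum>m\<in>{m. f m \<noteq> 0}. f m * monom_val m P)"

definition eval_poly3 :: "'a::comm_semiring_1 \<times> 'a \<times> 'a \<Rightarrow> 'a poly3 \<Rightarrow> 'a" where
  "eval_poly3 P p = (case P of (p0, p1, p2) \<Rightarrow> poly (poly (poly p [:[:p2:]:]) [:p1:]) p0)"

lemma eval_poly3_mult: "eval_poly3 P (p * q) = eval_poly3 P p * eval_poly3 P q"
  by (simp add: eval_poly3_def split: prod.splits)

lemma eval_poly3_add: "eval_poly3 P (p + q) = eval_poly3 P p + eval_poly3 P q"
  by (simp add: eval_poly3_def split: prod.splits)

lemma eval_poly3_sum: "eval_poly3 P (\<Sum>x\<in>A. p x) = (\<Sum>x\<in>A. eval_poly3 P (p x))"
  by (simp add: eval_poly3_def poly_sum split: prod.splits)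

lemma eval_poly3_monom3: "eval_poly3 P (monom3 m v) = v * monom_val m P"
  by (simp add: eval_poly3_def monom3_def monom_val_def poly_monom poly_const_pow mult_ac
      split: prod.splits)

lemma eval_form_eq_eval_poly3: "finite_supp f \<Longrightarrow> eval_form f P = eval_poly3 P (poly3_of f)"
  by (simp add: eval_form_def poly3_of_def eval_poly3_sum eval_poly3_monom3)

lemma eval_form_pmul:
  "finite_supp f \<Longrightarrow> finite_supp g \<Longrightarrow> eval_form (pmul f g) P = eval_form f P * eval_form g P"
  by (simp add: eval_form_eq_eval_poly3 finite_supp_pmul poly3_of_pmul eval_poly3_mult)

lemma eval_form_add:
  "finite_supp f \<Longrightarrow> finite_supp g \<Longrightarrow> eval_form (f + g) P = eval_form f P + eval_form g P"
  by (simp add: eval_form_eq_eval_poly3 finite_supp_add poly3_of_add eval_poly3_add)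

lemma eval_form_scalef: "finite_supp f \<Longrightarrow> eval_form (scalef c f) P = c * eval_form f P"
  by (simp add: eval_form_eq_eval_poly3 finite_supp_scalef poly3_of_scalef eval_poly3_mult)
    (simp add: eval_poly3_def split: prod.splits)

lemma eval_form_zero [simp]: "eval_form 0 P = 0"
  by (simp add: eval_form_def)

lemma eval_form_superset:
  "finite S \<Longrightarrow> {m. f m \<noteq> 0} \<subseteq> S \<Longrightarrow> eval_form f P = (\<Sum>m\<in>S. f m * monom_val m P)"
  unfolding eval_form_def by (rule sum.mono_neutral_left) auto

section \<open>Homogeneous forms and their products\<close>

definition monoms :: "nat \<Rightarrow> expo set" where
  "monoms t = {m. edeg m = t}"

lemma finite_monoms: "finite (monoms t)"
proof -
  have "monoms t \<subseteq> {..t} \<times> {..t} \<times> {..t}"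
    by (auto simp: monoms_def)
  then show ?thesis by (rule finite_subset) auto
qed

lemma hom_formsD: "f \<in> hom_forms t \<Longrightarrow> f m \<noteq> 0 \<Longrightarrow> edeg m = t"
  unfolding hom_forms_def by blast

lemma hom_forms_finite_supp: "f \<in> hom_forms t \<Longrightarrow> finite_supp f"
  unfolding finite_supp_def
  by (rule finite_subset[OF _ finite_monoms[of t]]) (auto simp: monoms_def dest: hom_formsD)

lemma subspace_hom_forms: "vs.subspace (hom_forms t)"
  unfolding vs.subspace_def hom_forms_def
  by (auto simp: scalef_apply simp del: edeg.simps) (metis add.left_neutral)

lemma pmul_hom_forms: "f \<in> hom_forms a \<Longrightarrow> g \<in> hom_forms b \<Longrightarrow> pmul f g \<in> hom_forms (a + b)"
  unfolding hom_forms_def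
proof clarify
  fix x y z
  assume f: "\<forall>m. f m \<noteq> 0 \<longrightarrow> edeg m = a" and g: "\<forall>m. g m \<noteq> 0 \<longrightarrow> edeg m = b"
    and "pmul f g (x, y, z) \<noteq> 0"
  then obtain i j l where "i \<le> x" "j \<le> y" "l \<le> z" "f (i, j, l) * g (x - i, y - j, z - l) \<noteq> 0"
    by (auto elim!: sum.not_neutral_contains_not_neutral)
  with f g show "edeg (x, y, z) = a + b" by fastforce
qed

lemma pmul_add_right: "pmul f (g + h) = pmul f g + pmul f h"
  by (rule ext, clarify) (simp add: distrib_left sum.distrib)

lemma pmul_add_left: "pmul (f + g) h = pmul f h + pmul g h"
  by (rule ext, clarify) (simp add: distrib_right sum.distrib)

lemma pmul_scalef_right: "pmul f (scalef c g) = scalef c (pmul f g)"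
  by (rule ext, clarify) (simp add: scalef_apply sum_distrib_left mult_ac)

lemma pmul_scalef_left: "pmul (scalef c f) g = scalef c (pmul f g)"
  by (rule ext, clarify) (simp add: scalef_apply sum_distrib_left mult_ac)

lemma pmul_zero_right [simp]: "pmul f 0 = 0"
  by (rule ext, clarify) simp

lemma pmul_zero_left [simp]: "pmul 0 f = 0"
  by (rule ext, clarify) simp

lemma pmul_sum_right: "pmul f (\<Sum>x\<in>A. g x) = (\<Sum>x\<in>A. pmul f (g x))"
proof (induction A rule: infinite_finite_induct)
  case (insert x F)
  then show ?case by (simp only: sum.insert[OF insert(1,2)] pmul_add_right)
next
  case (infinite A)
  then show ?case by (metis sum.infinite pmul_zero_right)
qed (simp only: sum.empty pmul_zero_right)

lemma pmul_sum_left: "pmul (\<Sum>x\<in>A. g x) f = (\<Sum>x\<in>A. pmul (g x) f)"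
proof (induction A rule: infinite_finite_induct)
  case (insert x F)
  then show ?case by (simp only: sum.insert[OF insert(1,2)] pmul_add_left)
next
  case (infinite A)
  then show ?case by (metis sum.infinite pmul_zero_left)
qed (simp only: sum.empty pmul_zero_left)

lemma sum3_delta:
  "(\<Sum>i\<le>(a::nat). \<Sum>j\<le>(b::nat). \<Sum>l\<le>(c::nat). if i = i0 \<and> j = j0 \<and> l = l0 then F i j l else 0) =
   (if i0 \<le> a \<and> j0 \<le> b \<and> l0 \<le> c then F i0 j0 l0 else (0::'a::comm_monoid_add))"
proof -
  have 1: "(\<Sum>l\<le>c. if i = i0 \<and> j = j0 \<and> l = l0 then F i j l else 0) =
     (if i = i0 \<and> j = j0 \<and> l0 \<le> c then F i j l0 else 0)" for i j
    by (cases "i = i0 \<and> j = j0") (auto simp: sum.delta)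
  have 2: "(\<Sum>j\<le>b. if i = i0 \<and> j = j0 \<and> l0 \<le> c then F i j l0 else 0) =
     (if i = i0 \<and> j0 \<le> b \<and> l0 \<le> c then F i j0 l0 else 0)" for i
    by (cases "i = i0 \<and> l0 \<le> c") auto
  show ?thesis unfolding 1 2 by (cases "j0 \<le> b \<and> l0 \<le> c") auto
qed

definition one_form :: "expo \<Rightarrow> 'a::zero_neq_one" where
  "one_form m = (if m = (0, 0, 0) then 1 else 0)"

lemma one_form_hom: "one_form \<in> hom_forms 0"
  by (auto simp: hom_forms_def one_form_def)

lemma finite_supp_one_form: "finite_supp one_form"
  by (rule hom_forms_finite_supp[OF one_form_hom])

lemma eval_one_form: "eval_form one_form P = 1"
proof -
  have "eval_form one_form P = (\<Sum>m\<in>{(0, 0, 0)}. one_form m * monom_val m P)"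
    by (rule eval_form_superset) (auto simp: one_form_def split: if_splits)
  then show ?thesis by (simp add: one_form_def monom_val_def split: prod.splits)
qed

lemma form_of_one: "form_of 1 = (one_form :: expo \<Rightarrow> 'a::comm_semiring_1)"
  by (rule ext) (auto simp: form_of_def one_form_def coeff_1 split: prod.splits)

lemma poly3_of_one_form: "poly3_of (one_form :: expo \<Rightarrow> 'a::field) = 1"
  by (rule form_of_inject) (simp add: form_of_poly3_of finite_supp_one_form form_of_one)

lemma pmul_one_form: "pmul one_form f = (f :: expo \<Rightarrow> 'a::field)"
proof (rule ext, clarify)
  fix a b c
  have "pmul one_form f (a, b, c) =
      (\<Sum>i\<le>a. \<Sum>j\<le>b. \<Sum>l\<le>c. if i = 0 \<and> j = 0 \<and> l = 0 then f (a - i, b - j, c - l) else 0)"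
    by (simp add: one_form_def if_distrib[of "\<lambda>x. x * _"] cong: if_cong)
  also have "\<dots> = f (a, b, c)" by (simp only: sum3_delta) simp
  finally show "pmul one_form f (a, b, c) = f (a, b, c)" .
qed

lemma pmul_linform: "pmul (linform (u, v, w)) g (a, b, c) =
   u * (if 0 < a then g (a - 1, b, c) else 0) + v * (if 0 < b then g (a, b - 1, c) else 0)
   + w * (if 0 < c then g (a, b, c - 1) else 0)"
proof -
  have L: "linform (u, v, w) (i, j, l) * g (a - i, b - j, c - l) =
     (if i = 1 \<and> j = 0 \<and> l = 0 then u * g (a - i, b - j, c - l) else 0) +
     (if i = 0 \<and> j = 1 \<and> l = 0 then v * g (a - i, b - j, c - l) else 0) +
     (if i = 0 \<and> j = 0 \<and> l = 1 then w * g (a - i, b - j, c - l) else 0)" for i j l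
    by (auto simp: linform_def)
  show ?thesis
    unfolding pmul.simps L sum.distrib sum3_delta by auto
qed

lemma linform_hom: "linform l \<in> hom_forms 1"
  by (auto simp: hom_forms_def linform_def split: prod.splits if_splits)

lemma finite_supp_linform: "finite_supp (linform l)"
  by (rule hom_forms_finite_supp[OF linform_hom])

lemma eval_linform: "eval_form (linform l) P = lin_eval l P"
proof -
  obtain u v w where l: "l = (u, v, w)" by (cases l)
  obtain p0 p1 p2 where P: "P = (p0, p1, p2)" by (cases P)
  have "eval_form (linform l) P = (\<Sum>m\<in>{(1,0,0), (0,1,0), (0,0,1)}. linform l m * monom_val m P)"
    by (rule eval_form_superset) (auto simp: linform_def l)
  also have "\<dots> = lin_eval l P" by (simp add: linform_def l P monom_val_def)
  finally show ?thesis .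
qed

definition form_pow :: "(expo \<Rightarrow> 'a::field) \<Rightarrow> nat \<Rightarrow> expo \<Rightarrow> 'a" where
  "form_pow g n = (pmul g ^^ n) one_form"

lemma form_pow_0 [simp]: "form_pow g 0 = one_form"
  by (simp add: form_pow_def)

lemma form_pow_Suc: "form_pow g (Suc n) = pmul g (form_pow g n)"
  by (simp add: form_pow_def)

lemma form_pow_hom: "g \<in> hom_forms 1 \<Longrightarrow> form_pow g n \<in> hom_forms n"
  using pmul_hom_forms[of g 1] by (induction n) (simp_all add: one_form_hom form_pow_Suc)

lemma finite_supp_form_pow: "finite_supp (form_pow (linform l) n)"
  using hom_forms_finite_supp form_pow_hom linform_hom by blast

lemma poly3_of_form_pow: "g \<in> hom_forms 1 \<Longrightarrow> poly3_of (form_pow g n) = (poly3_of g :: 'a::field poly3) ^ n"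
proof (induction n)
  case (Suc n)
  have "finite_supp g" "finite_supp (form_pow g n)"
    using Suc hom_forms_finite_supp form_pow_hom by blast+
  then show ?case using Suc by (simp add: form_pow_Suc poly3_of_pmul)
qed (simp add: poly3_of_one_form)

fun scale3 :: "'a::times \<Rightarrow> 'a \<times> 'a \<times> 'a \<Rightarrow> 'a \<times> 'a \<times> 'a" where
  "scale3 c (p0, p1, p2) = (c * p0, c * p1, c * p2)"

fun add3 :: "'a::plus \<times> 'a \<times> 'a \<Rightarrow> 'a \<times> 'a \<times> 'a \<Rightarrow> 'a \<times> 'a \<times> 'a" where
  "add3 (p0, p1, p2) (q0, q1, q2) = (p0 + q0, p1 + q1, p2 + q2)"

lemma lin_eval_add3: "lin_eval (add3 a b) e = lin_eval a e + lin_eval b (e :: 'a::field \<times> 'a \<times> 'a)"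
  by (cases a; cases b; cases e) (simp add: algebra_simps)

lemma lin_eval_scale3: "lin_eval (scale3 c a) e = c * lin_eval a (e :: 'a::field \<times> 'a \<times> 'a)"
  by (cases a; cases e) (simp add: algebra_simps)

lemma proportional_scale3: "c \<noteq> 0 \<Longrightarrow> proportional p (scale3 c p)"
  by (cases p) (auto simp: proportional_def)

lemma monom_val_scale3: "monom_val m (scale3 c P) = c ^ edeg m * monom_val m P"
  by (cases m; cases P) (simp add: monom_val_def power_mult_distrib power_add mult_ac)

lemma eval_form_scale3: "f \<in> hom_forms t \<Longrightarrow> eval_form f (scale3 c P) = c ^ t * eval_form f P"
  unfolding eval_form_def monom_val_scale3
  by (auto simp: sum_distrib_left mult_ac hom_forms_def intro!: sum.cong)

section \<open>Restriction to a line and singular points\<close>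

definition line_pt :: "'a::comm_semiring_1 \<times> 'a \<times> 'a \<Rightarrow> 'a \<times> 'a \<times> 'a \<Rightarrow> 'a \<Rightarrow> 'a \<times> 'a \<times> 'a" where
  "line_pt A B x = add3 A (scale3 x B)"

definition monom_line :: "expo \<Rightarrow> 'a::comm_semiring_1 \<times> 'a \<times> 'a \<Rightarrow> 'a \<times> 'a \<times> 'a \<Rightarrow> 'a poly" where
  "monom_line m A B = (case m of (a, b, c) \<Rightarrow>
      [:fst A, fst B:] ^ a * [:fst (snd A), fst (snd B):] ^ b * [:snd (snd A), snd (snd B):] ^ c)"

text \<open>The univariate polynomial \<open>x \<mapsto> f (A + x B)\<close>.\<close>

definition line_restr :: "(expo \<Rightarrow> 'a::comm_semiring_1) \<Rightarrow> 'a \<times> 'a \<times> 'a \<Rightarrow> 'a \<times> 'a \<times> 'a \<Rightarrow> 'a poly" where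
  "line_restr f A B = (\<Sum>m\<in>{m. f m \<noteq> 0}. smult (f m) (monom_line m A B))"

lemma line_pt_0 [simp]: "line_pt A B 0 = A"
  by (cases A; cases B) (simp add: line_pt_def)

lemma poly_monom_line: "poly (monom_line m A B) x = monom_val m (line_pt A B x)"
  by (cases m; cases A; cases B) (simp add: monom_line_def monom_val_def line_pt_def mult_ac)

lemma poly_line_restr: "poly (line_restr f A B) x = eval_form f (line_pt A B x)"
  by (simp add: line_restr_def eval_form_def poly_sum poly_monom_line)

lemma line_restr_zero [simp]: "line_restr 0 A B = 0"
  by (simp add: line_restr_def)

lemma coeff_0_line_restr: "coeff (line_restr f P v) 0 = eval_form f P"
  by (metis poly_0_coeff_0 poly_line_restr line_pt_0)

lemma poly_ext: "(\<And>x. poly p x = poly q x) \<Longrightarrow> p = (q :: 'a::field_char_0 poly)"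
  using poly_eq_poly_eq_iff by blast

lemma line_restr_pmul:
  "finite_supp f \<Longrightarrow> finite_supp g \<Longrightarrow>
    line_restr (pmul f g) A B = line_restr f A B * (line_restr g A B :: 'a::field_char_0 poly)"
  by (rule poly_ext) (simp add: poly_line_restr eval_form_pmul)

lemma line_restr_add:
  "finite_supp f \<Longrightarrow> finite_supp g \<Longrightarrow>
    line_restr (f + g) A B = line_restr f A B + (line_restr g A B :: 'a::field_char_0 poly)"
  by (rule poly_ext) (simp add: poly_line_restr eval_form_add)

lemma line_restr_scalef:
  "finite_supp f \<Longrightarrow> line_restr (scalef c f) A B = smult c (line_restr f A B :: 'a::field_char_0 poly)"
  by (rule poly_ext) (simp add: poly_line_restr eval_form_scalef)

lemma line_restr_sum:
  "(\<And>x. x \<in> S \<Longrightarrow> finite_supp (g x)) \<Longrightarrow>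
    line_restr (\<Sum>x\<in>S. g x) A B = (\<Sum>x\<in>S. line_restr (g x) A B :: 'a::field_char_0 poly)"
proof (induction S rule: infinite_finite_induct)
  case (insert x F)
  then have "finite_supp (\<Sum>x\<in>F. g x)" by (intro finite_supp_sum) auto
  with insert show ?case
    unfolding sum.insert[OF insert(1,2)] by (subst line_restr_add) simp_all
qed simp_all

lemma line_restr_linform:
  "line_restr (linform l) A B = [:lin_eval l A, lin_eval l (B :: 'a::field_char_0 \<times> _):]"
  by (rule poly_ext, cases l, cases A, cases B)
    (simp add: poly_line_restr eval_linform line_pt_def algebra_simps)

lemma line_restr_form_pow:
  "g \<in> hom_forms 1 \<Longrightarrow> line_restr (form_pow g n) A B = (line_restr g A B :: 'a::field_char_0 poly) ^ n"
proof (induction n)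
  case 0
  show ?case by (intro poly_ext) (simp add: poly_line_restr eval_one_form)
next
  case (Suc n)
  have "finite_supp g" "finite_supp (form_pow g n)"
    using Suc hom_forms_finite_supp form_pow_hom by blast+
  then show ?case using Suc by (simp add: form_pow_Suc line_restr_pmul)
qed

lemma degree_monom_line: "degree (monom_line m A B) \<le> edeg m"
proof -
  obtain a b c where m: "m = (a, b, c)" by (cases m)
  let ?p = "[:fst A, fst B:] ^ a" and ?q = "[:fst (snd A), fst (snd B):] ^ b"
    and ?r = "[:snd (snd A), snd (snd B):] ^ c"
  have "degree (monom_line m A B) \<le> degree (?p * ?q) + degree ?r"
    unfolding monom_line_def m by (simp add: degree_mult_le)
  also have "\<dots> \<le> degree ?p + degree ?q + degree ?r"
    by (simp add: degree_mult_le)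
  also have "\<dots> \<le> a + b + c"
    by (intro add_mono; rule order.trans[OF degree_power_le]; simp)
  finally show ?thesis by (simp add: m)
qed

lemma degree_line_restr: "f \<in> hom_forms t \<Longrightarrow> degree (line_restr f A B) \<le> t"
  unfolding line_restr_def
  by (rule degree_sum_le)
    (auto simp: hom_forms_finite_supp[unfolded finite_supp_def] dest: hom_formsD
      intro: order.trans[OF degree_smult_le] order.trans[OF degree_monom_line])

text \<open>A form is singular at \<open>P\<close> when its restriction to every line through \<open>P\<close> has a double
  root at \<open>P\<close>. In characteristic zero this is membership in \<open>\<wp>\<^sub>P\<^sup>2\<close>
  (\<open>sq_point_ideal_deg_sing_forms\<close>, \<open>singular_in_sq_point_ideal_deg\<close>).\<close>

definition singular_at :: "'a::field_char_0 \<times> 'a \<times> 'a \<Rightarrow> (expo \<Rightarrow> 'a) \<Rightarrow> bool" where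
  "singular_at P f \<longleftrightarrow> (\<forall>v. coeff (line_restr f P v) 0 = 0 \<and> coeff (line_restr f P v) 1 = 0)"

lemma x_power_monom: "[:0, 1:] ^ n = monom 1 n" "pCons 0 1 ^ n = monom 1 n"
  by (simp_all add: monom_altdef one_pCons)

lemma coeff_mult_1: "coeff (p * q) (Suc 0) = coeff p 0 * coeff q (Suc 0) + coeff p (Suc 0) * coeff q 0"
  by (simp add: coeff_mult atMost_Suc ac_simps)

lemma singular_at_zero: "singular_at P 0"
  by (simp add: singular_at_def)

lemma singular_at_add:
  "finite_supp f \<Longrightarrow> finite_supp g \<Longrightarrow> singular_at P f \<Longrightarrow> singular_at P g \<Longrightarrow> singular_at P (f + g)"
  by (simp add: singular_at_def line_restr_add)

lemma singular_at_scalef: "finite_supp f \<Longrightarrow> singular_at P f \<Longrightarrow> singular_at P (scalef c f)"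
  by (simp add: singular_at_def line_restr_scalef)

lemma singular_at_pmul:
  "finite_supp f \<Longrightarrow> finite_supp g \<Longrightarrow> singular_at P f \<Longrightarrow> singular_at P (pmul f g)"
  by (simp add: singular_at_def line_restr_pmul coeff_mult_0 coeff_mult_1)

lemma singular_at_pmul_vanishing:
  "finite_supp f \<Longrightarrow> finite_supp g \<Longrightarrow> eval_form f P = 0 \<Longrightarrow> eval_form g P = 0 \<Longrightarrow>
    singular_at P (pmul f g)"
  by (simp add: singular_at_def line_restr_pmul coeff_mult_0 coeff_mult_1 coeff_0_line_restr)

lemma singular_at_pmul_cancel:
  "finite_supp f \<Longrightarrow> finite_supp g \<Longrightarrow> eval_form f P \<noteq> 0 \<Longrightarrow> singular_at P (pmul f g) \<Longrightarrow>
    singular_at P g"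
  by (auto simp: singular_at_def line_restr_pmul coeff_mult_0 coeff_mult_1 coeff_0_line_restr)

lemma singular_at_linform_pmul:
  "finite_supp g \<Longrightarrow> lin_eval l P = 0 \<Longrightarrow> lin_eval l v \<noteq> 0 \<Longrightarrow>
    singular_at P (pmul (linform l) g) \<Longrightarrow> eval_form g P = 0"
  unfolding singular_at_def
  by (drule spec[of _ v])
    (auto simp: line_restr_pmul finite_supp_linform coeff_mult_1 line_restr_linform coeff_0_line_restr)

section \<open>Finite-dimensional spaces of forms\<close>

text \<open>The ambient space \<open>expo \<Rightarrow> 'a\<close> is infinite-dimensional, where \<^const>\<open>vs.dim\<close> is
  meaningless; dimension bounds are therefore only stated for subsets of finite-dimensional
  spans.\<close>

definition form_linear :: "((expo \<Rightarrow> 'a::field) \<Rightarrow> (expo \<Rightarrow> 'a)) \<Rightarrow> bool" where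
  "form_linear g \<longleftrightarrow> (\<forall>x y. g (x + y) = g x + g y) \<and> (\<forall>c x. g (scalef c x) = scalef c (g x))"

definition fin_dim :: "(expo \<Rightarrow> 'a::field) set \<Rightarrow> bool" where
  "fin_dim S \<longleftrightarrow> (\<exists>F. finite F \<and> S \<subseteq> vs.span F)"

lemma form_linear_module_hom: "form_linear g \<Longrightarrow> module_hom (scalef :: 'a::field \<Rightarrow> _) scalef g"
  unfolding module_hom_iff form_linear_def
  using vs.vector_space_axioms module_iff_vector_space by blast

lemma form_linear_span_image: "form_linear g \<Longrightarrow> vs.span (g ` S) = g ` vs.span S"
  using module_hom.span_image[OF form_linear_module_hom] by blast

lemma form_linear_pmul: "form_linear (pmul f)"
  by (simp add: form_linear_def pmul_add_right pmul_scalef_right)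

lemma fin_dim_basis:
  assumes "fin_dim S"
  obtains B where "B \<subseteq> S" "vs.independent B" "S \<subseteq> vs.span B" "finite B" "card B = vs.dim S"
proof -
  obtain F where F: "finite F" "S \<subseteq> vs.span F" using assms fin_dim_def by blast
  obtain B where B: "B \<subseteq> S" "vs.independent B" "S \<subseteq> vs.span B" "card B = vs.dim S"
    by (rule vs.basis_exists)
  have "finite B" using vs.independent_span_bound[OF F(1) B(2)] B(1) F(2) by blast
  then show ?thesis using B that by blast
qed

lemma fin_dim_subset: "S \<subseteq> T \<Longrightarrow> fin_dim T \<Longrightarrow> fin_dim S"
  unfolding fin_dim_def by blast

lemma fin_dim_image: "form_linear g \<Longrightarrow> fin_dim S \<Longrightarrow> fin_dim (g ` S)"
  unfolding fin_dim_def by (metis finite_imageI image_mono form_linear_span_image)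

lemma dim_subset_fin_dim: "S \<subseteq> T \<Longrightarrow> fin_dim T \<Longrightarrow> vs.dim S \<le> vs.dim T"
proof -
  assume "S \<subseteq> T" "fin_dim T"
  then obtain B where "T \<subseteq> vs.span B" "finite B" "card B = vs.dim T"
    using fin_dim_basis by metis
  then show ?thesis using vs.dim_le_card[of S B] \<open>S \<subseteq> T\<close> by auto
qed

lemma dim_image_le_fin_dim:
  assumes g: "form_linear g" and S: "fin_dim S"
  shows "vs.dim (g ` S) \<le> vs.dim S"
proof -
  obtain B where B: "B \<subseteq> S" "S \<subseteq> vs.span B" "finite B" "card B = vs.dim S"
    by (rule fin_dim_basis[OF S])
  have "g ` S \<subseteq> vs.span (g ` B)" using B(2) form_linear_span_image[OF g, of B] by blast
  then have "vs.dim (g ` S) \<le> card (g ` B)" using B(3) by (intro vs.dim_le_card) auto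
  also have "\<dots> \<le> card B" using B(3) by (rule card_image_le)
  finally show ?thesis using B(4) by simp
qed

lemma rank_nullity_le:
  assumes g: "form_linear g" and S: "fin_dim S" and sub: "vs.subspace S"
  shows "vs.dim S \<le> vs.dim (S \<inter> {x. g x = 0}) + vs.dim (g ` S)"
proof -
  interpret g: module_hom "scalef :: 'a \<Rightarrow> _" scalef g by (rule form_linear_module_hom[OF g])
  define K where "K = S \<inter> {x. g x = 0}"
  have "fin_dim K" by (rule fin_dim_subset[OF _ S]) (auto simp: K_def)
  then obtain B where B: "K \<subseteq> vs.span B" "finite B" "card B = vs.dim K"
    by (metis fin_dim_basis)
  obtain C where C: "C \<subseteq> g ` S" "g ` S \<subseteq> vs.span C" "finite C" "card C = vs.dim (g ` S)"
    by (metis fin_dim_basis[OF fin_dim_image[OF g S]])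
  obtain P where P: "P \<subseteq> S" "inj_on g P" "C = g ` P"
    using C(1) subset_image_inj by metis
  have "S \<subseteq> vs.span (B \<union> P)"
  proof
    fix x assume x: "x \<in> S"
    have "g x \<in> g ` vs.span P"
      using C(2) x form_linear_span_image[OF g, of P] P(3) by blast
    then obtain y where y: "y \<in> vs.span P" "g x = g y" by blast
    have "y \<in> S" using y(1) vs.span_minimal[OF P(1) sub] by blast
    then have "x - y \<in> K" using x y(2) vs.subspace_diff[OF sub] by (simp add: K_def g.diff)
    then have "(x - y) + y \<in> vs.span (B \<union> P)"
      using B(1) y(1) vs.span_mono[of B "B \<union> P"] vs.span_mono[of P "B \<union> P"] by (blast intro: vs.span_add)
    then show "x \<in> vs.span (B \<union> P)" by simp
  qed
  moreover have "finite P" using P(2,3) C(3) finite_image_iff by blast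
  ultimately have "vs.dim S \<le> card (B \<union> P)" using B(2) by (intro vs.dim_le_card) auto
  also have "\<dots> \<le> card B + card P" by (rule card_Un_le)
  also have "card P = card C" using P(2,3) card_image by metis
  finally show ?thesis using B(3) C(4) K_def by simp
qed

lemma sum_fun_apply: "(\<Sum>x\<in>A. g x) m = (\<Sum>x\<in>A. g x m :: 'b::comm_monoid_add)"
proof (induction A rule: infinite_finite_induct)
  case (insert x F)
  then show ?case by (simp only: sum.insert[OF insert(1,2)] plus_fun_apply)
qed simp_all

definition monom_form :: "expo \<Rightarrow> expo \<Rightarrow> 'a::{zero, one}" where
  "monom_form m = (\<lambda>m'. if m' = m then 1 else 0)"

lemma inj_monom_form: "inj (monom_form :: expo \<Rightarrow> expo \<Rightarrow> 'a::zero_neq_one)"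
  by (rule injI) (metis monom_form_def zero_neq_one)

lemma hom_forms_span_monom_forms:
  "hom_forms t \<subseteq> vs.span (monom_form ` monoms t :: (expo \<Rightarrow> 'a::field) set)"
proof
  fix f :: "expo \<Rightarrow> 'a" assume f: "f \<in> hom_forms t"
  have "f = (\<Sum>m\<in>monoms t. scalef (f m) (monom_form m))"
  proof (rule ext)
    fix m'
    have "(\<Sum>m\<in>monoms t. scalef (f m) (monom_form m)) m' = (\<Sum>m\<in>monoms t. if m = m' then f m' else 0)"
      unfolding sum_fun_apply by (rule sum.cong) (auto simp: monom_form_def scalef_apply)
    also have "\<dots> = f m'"
      using finite_monoms hom_formsD[OF f, of m'] by (auto simp: sum.delta monoms_def)
    finally show "f m' = (\<Sum>m\<in>monoms t. scalef (f m) (monom_form m)) m'" by simp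
  qed
  also have "\<dots> \<in> vs.span (monom_form ` monoms t)"
    by (intro vs.span_sum vs.span_scale vs.span_base) auto
  finally show "f \<in> vs.span (monom_form ` monoms t)" .
qed

lemma fin_dim_hom_forms: "fin_dim (hom_forms t :: (expo \<Rightarrow> 'a::field) set)"
  unfolding fin_dim_def using hom_forms_span_monom_forms finite_monoms by blast

lemma independent_monom_forms: "vs.independent (monom_form ` monoms t :: (expo \<Rightarrow> 'a::field) set)"
  unfolding vs.independent_explicit_module
proof (intro allI impI)
  fix T u v
  assume T: "finite T" "T \<subseteq> monom_form ` monoms t" and v: "v \<in> T"
    and sum0: "(\<Sum>v\<in>T. scalef (u v) v) = (0 :: expo \<Rightarrow> 'a)"
  obtain m where m: "v = monom_form m" using T(2) v by blast
  have wm: "w m = (if w = v then 1 else 0)" if "w \<in> T" for w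
    using that T(2) by (auto simp: m monom_form_def)
  have "(\<Sum>w\<in>T. scalef (u w) w) m = (\<Sum>w\<in>T. if w = v then u v else 0)"
    unfolding sum_fun_apply scalef_apply by (rule sum.cong[OF refl]) (simp add: wm)
  also have "\<dots> = u v" using T(1) v by simp
  finally show "u v = 0" using sum0 by simp
qed

lemma card_monoms_Suc: "card (monoms (Suc t)) = card (monoms t) + (t + 2)"
proof -
  let ?inc = "\<lambda>(a, b, c). (Suc a, b, c)" and ?edge = "\<lambda>b. (0, b, Suc t - b)"
  have split: "monoms (Suc t) = ?inc ` monoms t \<union> ?edge ` {..Suc t}"
  proof (rule set_eqI, clarify)
    fix a b c
    show "((a, b, c) \<in> monoms (Suc t)) = ((a, b, c) \<in> ?inc ` monoms t \<union> ?edge ` {..Suc t})"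
      by (cases a) (auto simp: monoms_def image_iff)
  qed
  have "inj_on ?inc (monoms t)" "inj_on ?edge {..Suc t}"
    by (auto simp: inj_on_def)
  from this[THEN card_image] show ?thesis
    unfolding split by (subst card_Un_disjoint) (auto simp: finite_monoms)
qed

lemma card_monoms: "2 * card (monoms t) = (t + 1) * (t + 2)"
proof (induction t)
  case 0
  have "monoms 0 = {(0, 0, 0)}" by (auto simp: monoms_def)
  then show ?case by simp
qed (simp add: card_monoms_Suc)

lemma dim_hom_forms_card: "vs.dim (hom_forms t :: (expo \<Rightarrow> 'a::field) set) = card (monoms t)"
proof -
  have "monom_form ` monoms t \<subseteq> (hom_forms t :: (expo \<Rightarrow> 'a) set)"
    by (auto simp: hom_forms_def monom_form_def monoms_def split: if_splits)
  then have "vs.dim (hom_forms t :: (expo \<Rightarrow> 'a) set) = card (monom_form ` monoms t :: (expo \<Rightarrow> 'a) set)"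
    using hom_forms_span_monom_forms independent_monom_forms by (metis vs.basis_card_eq_dim)
  also have "\<dots> = card (monoms t)"
    by (rule card_image[OF inj_on_subset[OF inj_monom_form]]) simp
  finally show ?thesis .
qed

lemma dim_hom_forms: "2 * vs.dim (hom_forms t :: (expo \<Rightarrow> 'a::field) set) = (t + 1) * (t + 2)"
  by (simp add: dim_hom_forms_card card_monoms)

lemma dim_hom_forms_Suc:
  "vs.dim (hom_forms (Suc t) :: (expo \<Rightarrow> 'a::field) set) = vs.dim (hom_forms t :: (expo \<Rightarrow> 'a) set) + (t + 2)"
  by (simp add: dim_hom_forms_card card_monoms_Suc)

lemma span_pmul_image: "vs.span (pmul f ` S) = pmul f ` vs.span S"
  by (rule form_linear_span_image[OF form_linear_pmul])

lemma dim_pmul_image_le: "S \<subseteq> hom_forms t \<Longrightarrow> vs.dim (pmul f ` S) \<le> vs.dim S"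
  by (rule dim_image_le_fin_dim[OF form_linear_pmul fin_dim_subset[OF _ fin_dim_hom_forms]])

lemma fin_dim_pmul_image: "S \<subseteq> hom_forms t \<Longrightarrow> fin_dim (pmul f ` S)"
  by (rule fin_dim_image[OF form_linear_pmul fin_dim_subset[OF _ fin_dim_hom_forms]])

section \<open>Projective frames\<close>

fun coord :: "nat \<Rightarrow> 'a \<times> 'a \<times> 'a \<Rightarrow> 'a" where
  "coord i (a, b, c) = (if i = 0 then a else if i = 1 then b else c)"

definition unit3 :: "nat \<Rightarrow> 'a::{zero, one} \<times> 'a \<times> 'a" where
  "unit3 k = (if k = 0 then (1, 0, 0) else if k = 1 then (0, 1, 0) else (0, 0, 1))"

text \<open>The second clause (the coordinate matrices are inverse also in the other
  order) follows from the first by linear algebra; it is included to avoid matrix theory.\<close>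

definition frame :: "(nat \<Rightarrow> 'a::field \<times> 'a \<times> 'a) \<Rightarrow> (nat \<Rightarrow> 'a \<times> 'a \<times> 'a) \<Rightarrow> bool" where
  "frame lam E \<longleftrightarrow> (\<forall>i<3. \<forall>j<3. lin_eval (lam i) (E j) = (if i = j then 1 else 0)) \<and>
     (\<forall>k<3. \<forall>l<3. (\<Sum>j<3. coord k (E j) * coord l (lam j)) = (if k = l then 1 else 0))"

lemma all_less_3: "(\<forall>i<(3::nat). P i) \<longleftrightarrow> P 0 \<and> P (Suc 0) \<and> P (Suc (Suc 0))"
  by (auto simp: numeral_3_eq_3 less_Suc_eq)

lemma sum_less_3: "(\<Sum>i<(3::nat). f i) = f 0 + f (Suc 0) + f (Suc (Suc 0))"
  by (simp add: numeral_3_eq_3)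

lemma lin_eval_commute: "lin_eval a b = lin_eval b a"
  by (cases a; cases b) (simp add: mult.commute)

lemma coord_add3: "coord k (add3 a b) = coord k a + coord k b"
  by (cases a; cases b) simp

lemma coord_scale3: "coord k (scale3 c a) = c * coord k a"
  by (cases a) simp

lemma frame_lin_eval:
  "frame lam E \<Longrightarrow> i < 3 \<Longrightarrow> j < 3 \<Longrightarrow> lin_eval (lam i) (E j) = (if i = j then 1 else 0)"
  unfolding frame_def by blast

lemma frame_coord_sum:
  "frame lam E \<Longrightarrow> k < 3 \<Longrightarrow> l < 3 \<Longrightarrow> (\<Sum>j<3. coord k (E j) * coord l (lam j)) = (if k = l then 1 else 0)"
  unfolding frame_def by blast

lemma frame_sym: "frame lam E \<Longrightarrow> frame E lam"
  unfolding frame_def all_less_3 sum_less_3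
  by (auto simp: lin_eval_commute mult.commute)

lemma frame_decomp:
  assumes "frame lam E"
  shows "P = add3 (scale3 (lin_eval (lam 0) P) (E 0))
    (add3 (scale3 (lin_eval (lam 1) P) (E 1)) (scale3 (lin_eval (lam 2) P) (E 2)))"
    (is "P = ?Q")
proof -
  obtain p0 p1 p2 where P: "P = (p0, p1, p2)" by (cases P)
  have "coord k ?Q = p0 * (\<Sum>j<3. coord k (E j) * coord 0 (lam j)) + p1 * (\<Sum>j<3. coord k (E j) * coord 1 (lam j))
        + p2 * (\<Sum>j<3. coord k (E j) * coord 2 (lam j))" for k
    unfolding sum_less_3 P coord_add3 coord_scale3
    by (cases "lam 0"; cases "lam 1"; cases "lam 2") (simp add: algebra_simps numeral_2_eq_2)
  then have "coord k ?Q = coord k P" if "k < 3" for k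
    using that frame_coord_sum[OF assms that] by (auto simp: P)
  from this[of 0] this[of 1] this[of 2] show ?thesis
    by (cases ?Q) (simp add: P)
qed

lemma linform_coord:
  "linform l m = (if m = (1,0,0) then coord 0 l else if m = (0,1,0) then coord 1 l
     else if m = (0,0,1) then coord 2 l else 0)"
  by (cases l) (simp add: linform_def)

lemma linform_unit3_frame:
  assumes "frame lam E" "k < 3"
  shows "linform (unit3 k) = (\<Sum>j<3. scalef (coord k (E j)) (linform (lam j)))"
proof (rule ext)
  fix m
  note h = frame_coord_sum[OF assms]
  have "(\<Sum>j<3. scalef (coord k (E j)) (linform (lam j))) m = (\<Sum>j<3. coord k (E j) * linform (lam j) m)"
    by (simp only: sum_less_3 plus_fun_apply scalef_apply)
  also have "\<dots> = (if m = (1,0,0) then (\<Sum>j<3. coord k (E j) * coord 0 (lam j)) else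
      if m = (0,1,0) then (\<Sum>j<3. coord k (E j) * coord 1 (lam j)) else
      if m = (0,0,1) then (\<Sum>j<3. coord k (E j) * coord 2 (lam j)) else 0)"
    by (simp add: linform_coord sum_distrib_left del: coord.simps)
  also have "\<dots> = linform (unit3 k) m"
    using assms(2) h[of 0] h[of 1] h[of 2]
    by (auto simp: unit3_def linform_def numeral_3_eq_3 less_Suc_eq simp del: coord.simps)
  finally show "linform (unit3 k) m = (\<Sum>j<3. scalef (coord k (E j)) (linform (lam j))) m" by simp
qed

definition fun3 :: "'b \<Rightarrow> 'b \<Rightarrow> 'b \<Rightarrow> nat \<Rightarrow> 'b" where
  "fun3 a b c i = (if i = 0 then a else if i = 1 then b else c)"

lemma fun3_simps [simp]: "fun3 a b c 0 = a" "fun3 a b c (Suc 0) = b" "fun3 a b c (Suc (Suc 0)) = c"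
  by (simp_all add: fun3_def)

lemma frame_fun3: "frame (fun3 l0 l1 l2) (fun3 e0 e1 e2) \<longleftrightarrow>
   lin_eval l0 e0 = 1 \<and> lin_eval l0 e1 = 0 \<and> lin_eval l0 e2 = 0 \<and>
   lin_eval l1 e0 = 0 \<and> lin_eval l1 e1 = 1 \<and> lin_eval l1 e2 = 0 \<and>
   lin_eval l2 e0 = 0 \<and> lin_eval l2 e1 = 0 \<and> lin_eval l2 e2 = 1 \<and>
   (\<forall>k<3. \<forall>l<3. coord k e0 * coord l l0 + coord k e1 * coord l l1 + coord k e2 * coord l l2
      = (if k = l then 1 else 0))"
  unfolding frame_def all_less_3 sum_less_3 by (simp del: coord.simps)

lemma frame_through_point:
  fixes P :: "'a::field \<times> 'a \<times> 'a"
  assumes "nonzero3 P"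
  shows "\<exists>lam E. frame lam E \<and> E 0 = P"
proof -
  obtain p0 p1 p2 where P: "P = (p0, p1, p2)" by (cases P)
  consider "p0 \<noteq> 0" | "p0 = 0" "p1 \<noteq> 0" | "p0 = 0" "p1 = 0" "p2 \<noteq> 0"
    using assms by (auto simp: nonzero3_def P)
  then show ?thesis
  proof cases
    case 1
    have "frame (fun3 (1/p0, 0, 0) (-p1/p0, 1, 0) (-p2/p0, 0, 1)) (fun3 P (0, 1, 0) (0, 0, 1))"
      unfolding frame_fun3 all_less_3 using 1 by (simp add: P field_simps)
    then show ?thesis by force
  next
    case 2
    have "frame (fun3 (0, 1/p1, 0) (1, -p0/p1, 0) (0, -p2/p1, 1)) (fun3 P (1, 0, 0) (0, 0, 1))"
      unfolding frame_fun3 all_less_3 using 2 by (simp add: P field_simps)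
    then show ?thesis by force
  next
    case 3
    have "frame (fun3 (0, 0, 1/p2) (1, 0, -p0/p2) (0, 1, -p1/p2)) (fun3 P (1, 0, 0) (0, 1, 0))"
      unfolding frame_fun3 all_less_3 using 3 by (simp add: P field_simps)
    then show ?thesis by force
  qed
qed

lemma frame_with_line:
  fixes L :: "'a::field \<times> 'a \<times> 'a"
  assumes "nonzero3 L"
  shows "\<exists>lam E. frame lam E \<and> lam 0 = L"
  using frame_through_point[OF assms] frame_sym by blast

lemma frame_shear:
  assumes fr: "frame lam E"
  shows "frame (fun3 (lam 0) (add3 (lam 1) (scale3 (-c) (lam 2))) (lam 2))
     (fun3 (E 0) (E 1) (add3 (E 2) (scale3 c (E 1))))"
proof -
  have lin_eval_add3_right: "lin_eval e (add3 a b) = lin_eval e a + lin_eval e b" for a b e :: "'a \<times> 'a \<times> 'a"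
    by (cases a; cases b; cases e) (simp add: algebra_simps)
  have lin_eval_scale3_right: "lin_eval e (scale3 c a) = c * lin_eval e a" for a e :: "'a \<times> 'a \<times> 'a" and c
    by (cases a; cases e) (simp add: algebra_simps)
  have "coord k (E 0) * coord l (lam 0) + coord k (E 1) * coord l (add3 (lam 1) (scale3 (-c) (lam 2)))
      + coord k (add3 (E 2) (scale3 c (E 1))) * coord l (lam 2) = (if k = l then 1 else 0)"
    if "k < 3" "l < 3" for k l
  proof -
    have "coord k (E 0) * coord l (lam 0) + coord k (E 1) * coord l (add3 (lam 1) (scale3 (-c) (lam 2)))
      + coord k (add3 (E 2) (scale3 c (E 1))) * coord l (lam 2) = (\<Sum>j<3. coord k (E j) * coord l (lam j))"
      by (simp only: sum_less_3 coord_add3 coord_scale3) (simp add: algebra_simps numeral_2_eq_2)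
    then show ?thesis using frame_coord_sum[OF fr that] by simp
  qed
  moreover have "lin_eval (lam i) (E j) = (if i = j then 1 else 0)" if "i < 3" "j < 3" for i j
    using frame_lin_eval[OF fr that] .
  ultimately show ?thesis
    unfolding frame_fun3
    by (simp add: lin_eval_add3 lin_eval_add3_right lin_eval_scale3 lin_eval_scale3_right
        numeral_2_eq_2 del: coord.simps)
qed

lemma frame_for_line:
  fixes L :: "'a::field_char_0 \<times> 'a \<times> 'a"
  assumes L: "nonzero3 L" and X: "finite X"
    and XP: "\<And>P. P \<in> X \<Longrightarrow> nonzero3 P \<and> lin_eval L P = 0"
  shows "\<exists>lam E. frame lam E \<and> lam 0 = L \<and> (\<forall>P\<in>X. lin_eval (lam 1) P \<noteq> 0)"
proof -
  obtain lam E where fr: "frame lam E" and l0: "lam 0 = L" using frame_with_line[OF L] by blast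
  have nz: "lin_eval (lam 1) P \<noteq> 0 \<or> lin_eval (lam 2) P \<noteq> 0" if "P \<in> X" for P
  proof (rule ccontr)
    assume "\<not> (lin_eval (lam 1) P \<noteq> 0 \<or> lin_eval (lam 2) P \<noteq> 0)"
    then have "P = (0, 0, 0)"
      using frame_decomp[OF fr, of P] XP[OF that] l0
      by (cases "E 0"; cases "E 1"; cases "E 2") simp
    then show False using XP[OF that] by (simp add: nonzero3_def)
  qed
  text \<open>Shear \<open>lam 1\<close> by a multiple of \<open>lam 2\<close> whose slope avoids the finitely many bad values.\<close>
  obtain c where c: "c \<notin> (\<lambda>P. lin_eval (lam 1) P / lin_eval (lam 2) P) ` X"
    using ex_new_if_finite[OF infinite_UNIV_char_0] X by blast
  have "lin_eval (add3 (lam 1) (scale3 (-c) (lam 2))) P \<noteq> 0" if P: "P \<in> X" for P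
  proof (cases "lin_eval (lam 2) P = 0")
    case True
    then show ?thesis using nz[OF P] by (simp add: lin_eval_add3 lin_eval_scale3)
  next
    case False
    have "c \<noteq> lin_eval (lam 1) P / lin_eval (lam 2) P" using c P by blast
    then have "lin_eval (lam 1) P - c * lin_eval (lam 2) P \<noteq> 0"
      using False by (auto simp: field_simps)
    then show ?thesis by (simp add: lin_eval_add3 lin_eval_scale3)
  qed
  then show ?thesis
    using frame_shear[OF fr, of c] l0 by fastforce
qed

lemma on_line_param:
  assumes fr: "frame lam E" and l0: "lin_eval (lam 0) P = 0" and a: "lin_eval (lam 1) P \<noteq> 0"
  shows "P = scale3 (lin_eval (lam 1) P) (line_pt (E 1) (E 2) (lin_eval (lam 2) P / lin_eval (lam 1) P))"
proof -
  have "P = add3 (scale3 (lin_eval (lam 0) P) (E 0))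
      (add3 (scale3 (lin_eval (lam 1) P) (E 1)) (scale3 (lin_eval (lam 2) P) (E 2)))"
    by (rule frame_decomp[OF fr])
  also have "\<dots> = scale3 (lin_eval (lam 1) P) (line_pt (E 1) (E 2) (lin_eval (lam 2) P / lin_eval (lam 1) P))"
    using a l0 by (cases "E 0"; cases "E 1"; cases "E 2") (simp add: line_pt_def field_simps)
  finally show ?thesis .
qed

section \<open>Change of coordinates\<close>

definition frame_monom :: "(nat \<Rightarrow> 'a::field \<times> 'a \<times> 'a) \<Rightarrow> expo \<Rightarrow> expo \<Rightarrow> 'a" where
  "frame_monom lam m = (case m of (a, b, c) \<Rightarrow>
     pmul (pmul (form_pow (linform (lam 0)) a) (form_pow (linform (lam 1)) b)) (form_pow (linform (lam 2)) c))"

definition expo_inc :: "nat \<Rightarrow> expo \<Rightarrow> expo" where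
  "expo_inc j m = (case m of (a, b, c) \<Rightarrow>
     if j = 0 then (Suc a, b, c) else if j = 1 then (a, Suc b, c) else (a, b, Suc c))"

lemma edeg_expo_inc: "edeg (expo_inc j m) = Suc (edeg m)"
  by (cases m) (simp add: expo_inc_def)

lemma frame_monom_hom: "frame_monom lam m \<in> hom_forms (edeg m)"
proof -
  obtain a b c where m: "m = (a, b, c)" by (cases m)
  show ?thesis unfolding frame_monom_def m
    by (auto intro!: pmul_hom_forms[of _ "a + b" _ c, simplified] pmul_hom_forms form_pow_hom linform_hom)
qed

lemma finite_supp_frame_monom: "finite_supp (frame_monom lam m)"
  using hom_forms_finite_supp frame_monom_hom by blast

lemma poly3_of_frame_monom: "poly3_of (frame_monom lam (a, b, c)) =
   poly3_of (linform (lam 0)) ^ a * poly3_of (linform (lam 1)) ^ b * poly3_of (linform (lam 2)) ^ c"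
  by (simp add: frame_monom_def poly3_of_pmul finite_supp_pmul finite_supp_form_pow
      poly3_of_form_pow[OF linform_hom])

lemma pmul_frame_monom:
  assumes "j < 3"
  shows "pmul (linform (lam j)) (frame_monom lam m) = frame_monom lam (expo_inc j m)"
proof -
  obtain a b c where m: "m = (a, b, c)" by (cases m)
  show ?thesis
  proof (rule poly3_of_inject)
    show "finite_supp (pmul (linform (lam j)) (frame_monom lam m))"
      by (simp add: finite_supp_pmul finite_supp_linform finite_supp_frame_monom)
    show "poly3_of (pmul (linform (lam j)) (frame_monom lam m)) = poly3_of (frame_monom lam (expo_inc j m))"
      using assms
      by (auto simp: poly3_of_pmul finite_supp_linform finite_supp_frame_monom m expo_inc_def
          poly3_of_frame_monom numeral_3_eq_3 less_Suc_eq numeral_2_eq_2 mult_ac)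
  qed (rule finite_supp_frame_monom)
qed

lemma frame_monom_expo_inc2:
  "i < 3 \<Longrightarrow> j < 3 \<Longrightarrow>
    frame_monom lam (expo_inc i (expo_inc j m)) = pmul (pmul (linform (lam i)) (linform (lam j))) (frame_monom lam m)"
  by (simp add: pmul_frame_monom[symmetric] pmul_assoc finite_supp_linform finite_supp_frame_monom)

lemma line_restr_frame_monom:
  "line_restr (frame_monom lam (a, b, c)) A B =
    [:lin_eval (lam 0) A, lin_eval (lam 0) B:] ^ a * [:lin_eval (lam 1) A, lin_eval (lam 1) B:] ^ b *
    [:lin_eval (lam 2) A, lin_eval (lam 2) (B :: 'a::field_char_0 \<times> _):] ^ c"
  by (simp add: frame_monom_def line_restr_pmul finite_supp_pmul finite_supp_form_pow
      line_restr_form_pow[OF linform_hom] line_restr_linform)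

text \<open>The quotients in \<open>f = x0 q0 + x1 q1 + x2 q2\<close>, where each monomial of \<open>f\<close> is assigned
  to its first variable.\<close>

definition var_quot :: "nat \<Rightarrow> (expo \<Rightarrow> 'a::zero) \<Rightarrow> expo \<Rightarrow> 'a" where
  "var_quot k f m = (case m of (a, b, c) \<Rightarrow>
     if k = 0 then f (Suc a, b, c)
     else if k = 1 then (if a = 0 then f (0, Suc b, c) else 0)
     else (if a = 0 \<and> b = 0 then f (0, 0, Suc c) else 0))"

lemma var_quot_hom:
  assumes "f \<in> hom_forms (Suc t)"
  shows "var_quot k f \<in> hom_forms t"
  unfolding hom_forms_def
proof (intro CollectI allI impI)
  fix m assume "var_quot k f m \<noteq> 0"
  then show "edeg m = t"
    by (cases m) (auto simp: var_quot_def split: if_splits dest: hom_formsD[OF assms])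
qed

lemma var_quot_decomp:
  assumes "f \<in> hom_forms (Suc t)"
  shows "f = (\<Sum>k<3. pmul (linform (unit3 k)) (var_quot k f))"
proof (rule ext, clarify)
  fix a b c
  have f0: "f (0, 0, 0) = 0" using hom_formsD[OF assms, of "(0, 0, 0)"] by auto
  show "f (a, b, c) = (\<Sum>k<3. pmul (linform (unit3 k)) (var_quot k f)) (a, b, c)"
    unfolding sum_less_3 plus_fun_apply
    by (cases a; cases b; cases c) (simp_all add: unit3_def pmul_linform var_quot_def f0 del: pmul.simps)
qed

lemma hom_forms_span_frame_monoms:
  assumes fr: "frame lam E" and f: "f \<in> hom_forms t"
  shows "f \<in> vs.span (frame_monom lam ` monoms t)"
  using f
proof (induction t arbitrary: f)
  case 0
  have "f = scalef (f (0, 0, 0)) one_form"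
    using 0 by (auto simp: fun_eq_iff one_form_def hom_forms_def scalef_apply)
  moreover have "frame_monom lam (0, 0, 0) = one_form"
    by (simp add: frame_monom_def pmul_one_form)
  moreover have "(0, 0, 0) \<in> monoms 0" by (simp add: monoms_def)
  ultimately show ?case by (metis image_eqI vs.span_base vs.span_scale)
next
  case (Suc t)
  have step: "pmul (linform (lam j)) g \<in> vs.span (frame_monom lam ` monoms (Suc t))"
    if "j < 3" "g \<in> vs.span (frame_monom lam ` monoms t)" for j g
  proof -
    have "pmul (linform (lam j)) g \<in> vs.span (pmul (linform (lam j)) ` frame_monom lam ` monoms t)"
      using that(2) span_pmul_image by blast
    also have "\<dots> \<subseteq> vs.span (frame_monom lam ` monoms (Suc t))"
      by (rule vs.span_mono) (auto simp: pmul_frame_monom[OF \<open>j < 3\<close>] monoms_def edeg_expo_inc)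
    finally show ?thesis .
  qed
  have IH: "var_quot k f \<in> vs.span (frame_monom lam ` monoms t)" for k
    using Suc.IH var_quot_hom Suc.prems by blast
  have "f = (\<Sum>k<3. pmul (linform (unit3 k)) (var_quot k f))"
    by (rule var_quot_decomp[OF Suc.prems])
  also have "\<dots> = (\<Sum>k<3. \<Sum>j<3. scalef (coord k (E j)) (pmul (linform (lam j)) (var_quot k f)))"
    by (rule sum.cong[OF refl]) (simp add: linform_unit3_frame[OF fr] pmul_sum_left pmul_scalef_left)
  also have "\<dots> \<in> vs.span (frame_monom lam ` monoms (Suc t))"
    by (intro vs.span_sum vs.span_scale step IH) auto
  finally show ?case .
qed

lemma span_image_expansion:
  assumes "finite S" "x \<in> vs.span (g ` S)"
  shows "\<exists>u. x = (\<Sum>s\<in>S. scalef (u s) (g s :: expo \<Rightarrow> 'a::field))"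
  using assms(2)
proof (induction rule: vs.span_induct_alt)
  case base
  show ?case by (rule exI[of _ "\<lambda>_. 0"]) (simp add: vs.scale_zero_left)
next
  case (step c x y)
  then obtain s0 u where s0: "s0 \<in> S" "x = g s0" and y: "y = (\<Sum>s\<in>S. scalef (u s) (g s))"
    by blast
  have "(\<Sum>s\<in>S. scalef (if s = s0 then c else 0) (g s)) = (\<Sum>s\<in>S. if s = s0 then scalef c (g s) else 0)"
    by (rule sum.cong) (simp_all add: vs.scale_zero_left)
  also have "\<dots> = scalef c x"
    using s0 assms(1) by (simp add: sum.delta')
  finally have "scalef c x + y = (\<Sum>s\<in>S. scalef ((if s = s0 then c else 0) + u s) (g s))"
    by (simp add: y vs.scale_left_distrib sum.distrib)
  then show ?case by (rule exI[of _ "\<lambda>s. (if s = s0 then c else 0) + u s"])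
qed

corollary frame_monom_expansion:
  "frame lam E \<Longrightarrow> f \<in> hom_forms t \<Longrightarrow> \<exists>u. f = (\<Sum>m\<in>monoms t. scalef (u m) (frame_monom lam m))"
  using span_image_expansion[OF finite_monoms hom_forms_span_frame_monoms] .

text \<open>On the line through \<open>A\<close> and \<open>B\<close> every frame monomial restricts to \<open>0\<close> or a power of \<open>x\<close>,
  so coefficients of the restriction of a form pick out coefficients of its frame expansion.\<close>

lemma coeff_line_restr_expansion:
  fixes u :: "expo \<Rightarrow> 'a::field_char_0"
  assumes "\<And>m. m \<in> monoms t \<Longrightarrow> line_restr (frame_monom lam m) A B = (if Q m then monom 1 (d m) else 0)"
    and "\<And>m. m \<in> monoms t \<Longrightarrow> Q m \<and> d m = k \<longleftrightarrow> m = m'" and "m' \<in> monoms t"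
  shows "coeff (line_restr (\<Sum>m\<in>monoms t. scalef (u m) (frame_monom lam m)) A B) k = u m'"
proof -
  have "coeff (line_restr (frame_monom lam m) A B) k = (if m = m' then 1 else 0)" if "m \<in> monoms t" for m
    using assms(1,2)[OF that] by (cases "Q m") auto
  then have "coeff (line_restr (\<Sum>m\<in>monoms t. scalef (u m) (frame_monom lam m)) A B) k
      = (\<Sum>m\<in>monoms t. if m = m' then u m else 0)"
    by (simp add: line_restr_sum finite_supp_scalef finite_supp_frame_monom line_restr_scalef coeff_sum
        if_distrib[of "\<lambda>x. _ * x"] cong: if_cong)
  then show ?thesis using assms(3) finite_monoms by (simp add: sum.delta')
qed

section \<open>The square of the ideal of a point\<close>

definition sing_forms :: "('a::field_char_0 \<times> 'a \<times> 'a) set \<Rightarrow> nat \<Rightarrow> (expo \<Rightarrow> 'a) set" where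
  "sing_forms Y t = {f \<in> hom_forms t. \<forall>P\<in>Y. singular_at P f}"

lemma sing_forms_subset: "sing_forms Y t \<subseteq> hom_forms t"
  by (auto simp: sing_forms_def)

lemma sing_forms_empty: "sing_forms {} t = hom_forms t"
  by (simp add: sing_forms_def)

lemma fin_dim_sing_forms: "fin_dim (sing_forms Y t)"
  by (rule fin_dim_subset[OF sing_forms_subset fin_dim_hom_forms])

lemma subspace_sing_forms: "vs.subspace (sing_forms Y t)"
  unfolding vs.subspace_def sing_forms_def
  using vs.subspace_0[OF subspace_hom_forms] vs.subspace_add[OF subspace_hom_forms]
    vs.subspace_scale[OF subspace_hom_forms]
  by (auto intro: singular_at_zero singular_at_add singular_at_scalef hom_forms_finite_supp)

lemma sq_point_ideal_degI:
  assumes "2 \<le> t" "lin_eval l1 P = 0" "lin_eval l2 P = 0" "g \<in> hom_forms (t - 2)"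
  shows "pmul (pmul (linform l1) (linform l2)) g \<in> sq_point_ideal_deg P t"
  unfolding sq_point_ideal_deg_def using assms by (intro vs.span_base) blast

lemma sq_point_ideal_deg_sing_forms: "sq_point_ideal_deg P t \<subseteq> sing_forms {P} t"
  unfolding sq_point_ideal_deg_def
proof (rule vs.span_minimal[OF _ subspace_sing_forms], clarify)
  fix l1 l2 and g :: "expo \<Rightarrow> 'a"
  assume h: "2 \<le> t" "lin_eval l1 P = 0" "lin_eval l2 P = 0" "g \<in> hom_forms (t - 2)"
  have "pmul (linform l1) (linform l2) \<in> hom_forms 2"
    using pmul_hom_forms[OF linform_hom linform_hom] by (simp add: numeral_2_eq_2)
  then have "pmul (pmul (linform l1) (linform l2)) g \<in> hom_forms (2 + (t - 2))"
    using h(4) by (rule pmul_hom_forms)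
  then have "pmul (pmul (linform l1) (linform l2)) g \<in> hom_forms t"
    using h(1) by (simp only: le_add_diff_inverse)
  moreover have "singular_at P (pmul (pmul (linform l1) (linform l2)) g)"
    by (intro singular_at_pmul singular_at_pmul_vanishing finite_supp_pmul finite_supp_linform
        hom_forms_finite_supp[OF h(4)]) (simp_all add: eval_linform h)
  ultimately show "pmul (pmul (linform l1) (linform l2)) g \<in> sing_forms {P} t"
    using h(1) by (simp add: sing_forms_def)
qed

lemma frame_monom_in_sq_point_ideal_deg:
  assumes fr: "frame lam E" and m: "m \<in> monoms t" "m = (a, b, c)" and bc: "2 \<le> b + c"
  shows "frame_monom lam m \<in> sq_point_ideal_deg (E 0) t"
proof -
  have L: "lin_eval (lam 1) (E 0) = 0" "lin_eval (lam 2) (E 0) = 0"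
    using frame_lin_eval[OF fr, of 1 0] frame_lin_eval[OF fr, of 2 0] by simp_all
  obtain i j m' where ij: "i \<in> {1, 2}" "j \<in> {1, 2}" and m': "m = expo_inc i (expo_inc j m')"
  proof -
    consider "2 \<le> b" | "2 \<le> c" | "1 \<le> b" "1 \<le> c" using bc by linarith
    then show ?thesis
    proof cases
      case 1
      then show ?thesis by (intro that[of 1 1 "(a, b - 2, c)"]) (auto simp: m expo_inc_def)
    next
      case 2
      then show ?thesis by (intro that[of 2 2 "(a, b, c - 2)"]) (auto simp: m expo_inc_def)
    next
      case 3
      then show ?thesis by (intro that[of 1 2 "(a, b - 1, c - 1)"]) (auto simp: m expo_inc_def)
    qed
  qed
  have "edeg m' + 2 = t" using m(1) unfolding m' by (simp add: monoms_def edeg_expo_inc)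
  then show ?thesis
    unfolding m' using ij L frame_monom_hom[of lam m']
    by (subst frame_monom_expo_inc2) (auto intro!: sq_point_ideal_degI)
qed

lemma frame_expansion_in_sq_point_ideal_deg:
  assumes fr: "frame lam E" and low: "\<And>a b c. (a, b, c) \<in> monoms t \<Longrightarrow> b + c \<le> 1 \<Longrightarrow> u (a, b, c) = 0"
  shows "(\<Sum>m\<in>monoms t. scalef (u m) (frame_monom lam m)) \<in> sq_point_ideal_deg (E 0) t"
  unfolding sq_point_ideal_deg_def
proof (intro vs.span_sum)
  fix m assume m: "m \<in> monoms t"
  obtain a b c where abc: "m = (a, b, c)" by (cases m)
  show "scalef (u m) (frame_monom lam m) \<in> vs.span {pmul (pmul (linform l1) (linform l2)) g |l1 l2 g.
      2 \<le> t \<and> lin_eval l1 (E 0) = 0 \<and> lin_eval l2 (E 0) = 0 \<and> g \<in> hom_forms (t - 2)}"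
  proof (cases "2 \<le> b + c")
    case True
    show ?thesis
      using frame_monom_in_sq_point_ideal_deg[OF fr m abc True] unfolding sq_point_ideal_deg_def
      by (rule vs.span_scale)
  next
    case False
    then show ?thesis using low m by (simp add: abc vs.scale_zero_left vs.span_zero)
  qed
qed

text \<open>Membership in \<open>\<wp>\<^sub>P\<^sup>2\<close> is detected by three coefficients: in a frame with \<open>E 0 = P\<close>, they are
  the coefficients of the frame monomials \<open>lam 0\<^sup>t\<close>, \<open>lam 0\<^sup>t\<^sup>-\<^sup>1 lam 1\<close> and \<open>lam 0\<^sup>t\<^sup>-\<^sup>1 lam 2\<close>,
  and every other frame monomial lies in \<open>\<wp>\<^sub>P\<^sup>2\<close>.\<close>

lemma sq_point_ideal_deg_frameI:
  fixes P :: "'a::field_char_0 \<times> 'a \<times> 'a"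
  assumes fr: "frame lam E" and E0: "E 0 = P" and f: "f \<in> hom_forms t"
    and z0: "coeff (line_restr f P (E 1)) 0 = 0" and z1: "coeff (line_restr f P (E 1)) 1 = 0"
    and z2: "coeff (line_restr f P (E 2)) 1 = 0"
  shows "f \<in> sq_point_ideal_deg P t"
proof -
  have L: "lin_eval (lam 0) P = 1" "lin_eval (lam 1) P = 0" "lin_eval (lam 2) P = 0"
    "lin_eval (lam 0) (E 1) = 0" "lin_eval (lam 1) (E 1) = 1" "lin_eval (lam 2) (E 1) = 0"
    "lin_eval (lam 0) (E 2) = 0" "lin_eval (lam 1) (E 2) = 0" "lin_eval (lam 2) (E 2) = 1"
    using frame_lin_eval[OF fr] by (auto simp: E0[symmetric])
  obtain u where fu: "f = (\<Sum>m\<in>monoms t. scalef (u m) (frame_monom lam m))"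
    using frame_monom_expansion[OF fr f] by blast
  have r1: "line_restr (frame_monom lam m) P (E 1) = (if snd (snd m) = 0 then monom 1 (fst (snd m)) else 0)"
    and r2: "line_restr (frame_monom lam m) P (E 2) = (if fst (snd m) = 0 then monom 1 (snd (snd m)) else 0)"
    for m using L by (cases m; simp add: line_restr_frame_monom x_power_monom one_pCons[symmetric])+
  have u0: "u (t, 0, 0) = 0"
    using z0 unfolding fu
    by (subst (asm) coeff_line_restr_expansion[where m' = "(t, 0, 0)", OF r1])
      (auto simp: monoms_def split: prod.splits)
  have u1: "u (t - 1, 1, 0) = 0" if "1 \<le> t"
    using z1 that unfolding fu
    by (subst (asm) coeff_line_restr_expansion[where m' = "(t - 1, 1, 0)", OF r1])
      (auto simp: monoms_def split: prod.splits)
  have u2: "u (t - 1, 0, 1) = 0" if "1 \<le> t"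
    using z2 that unfolding fu
    by (subst (asm) coeff_line_restr_expansion[where m' = "(t - 1, 0, 1)", OF r2])
      (auto simp: monoms_def split: prod.splits)
  have "f \<in> sq_point_ideal_deg (E 0) t"
    unfolding fu
  proof (rule frame_expansion_in_sq_point_ideal_deg[OF fr])
    fix a b c assume "(a, b, c) \<in> monoms t" "b + c \<le> 1"
    moreover from this(2) have "(b, c) \<in> {(0, 0), (1, 0), (0, 1)}" by auto
    ultimately show "u (a, b, c) = 0" using u0 u1 u2 by (auto simp: monoms_def)
  qed
  then show ?thesis using E0 by simp
qed

lemma singular_in_sq_point_ideal_deg:
  fixes P :: "'a::field_char_0 \<times> 'a \<times> 'a"
  assumes "nonzero3 P" "f \<in> hom_forms t" "singular_at P f"
  shows "f \<in> sq_point_ideal_deg P t"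
proof -
  obtain lam E where fr: "frame lam E" and E0: "E 0 = P"
    using frame_through_point[OF assms(1)] by blast
  have h: "coeff (line_restr f P v) 0 = 0 \<and> coeff (line_restr f P v) 1 = 0" for v
    using assms(3) unfolding singular_at_def by blast
  show ?thesis by (rule sq_point_ideal_deg_frameI[OF fr E0 assms(2)]) (simp_all only: h)
qed

lemma fin_ideal_deg_eq:
  fixes Y :: "('a::field_char_0 \<times> 'a \<times> 'a) set"
  assumes "\<And>P. P \<in> Y \<Longrightarrow> nonzero3 P"
  shows "fin_ideal_deg Y t = sing_forms Y t"
proof (intro set_eqI iffI)
  fix f assume "f \<in> fin_ideal_deg Y t"
  then show "f \<in> sing_forms Y t"
    using sq_point_ideal_deg_sing_forms unfolding fin_ideal_deg_def sing_forms_def by blast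
next
  fix f assume "f \<in> sing_forms Y t"
  then show "f \<in> fin_ideal_deg Y t"
    using singular_in_sq_point_ideal_deg[OF assms] by (auto simp: fin_ideal_deg_def sing_forms_def)
qed

section \<open>Forms vanishing on a line\<close>

lemma frame_expansion_linform_dvd:
  assumes "\<And>m. m \<in> monoms t \<Longrightarrow> fst m = 0 \<Longrightarrow> u m = 0"
  shows "\<exists>g \<in> hom_forms (t - 1). (\<Sum>m\<in>monoms t. scalef (u m) (frame_monom lam m)) = pmul (linform (lam 0)) g"
proof -
  define g where "g = (\<Sum>m\<in>monoms t. if fst m = 0 then 0 else scalef (u m) (frame_monom lam (fst m - 1, snd m)))"
  have "g \<in> hom_forms (t - 1)"
    unfolding g_def
  proof (rule vs.subspace_sum[OF subspace_hom_forms])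
    fix m assume "m \<in> monoms t"
    then show "(if fst m = 0 then 0 else scalef (u m) (frame_monom lam (fst m - 1, snd m))) \<in> hom_forms (t - 1)"
      using frame_monom_hom[of lam "(fst m - 1, snd m)"]
      by (cases m) (auto simp: monoms_def vs.subspace_0[OF subspace_hom_forms] vs.subspace_scale[OF subspace_hom_forms])
  qed
  moreover have "pmul (linform (lam 0)) g = (\<Sum>m\<in>monoms t. if fst m = 0 then 0 else scalef (u m) (frame_monom lam m))"
    unfolding g_def pmul_sum_right
  proof (rule sum.cong[OF refl])
    fix m :: expo
    obtain a b c where m: "m = (a, b, c)" by (cases m)
    show "pmul (linform (lam 0)) (if fst m = 0 then 0 else scalef (u m) (frame_monom lam (fst m - 1, snd m))) =
       (if fst m = 0 then 0 else scalef (u m) (frame_monom lam m))"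
      using pmul_frame_monom[of 0 lam "(a - 1, b, c)"] by (auto simp: m pmul_scalef_right expo_inc_def)
  qed
  moreover have "\<dots> = (\<Sum>m\<in>monoms t. scalef (u m) (frame_monom lam m))"
    by (rule sum.cong[OF refl]) (auto simp: assms vs.scale_zero_left)
  ultimately show ?thesis by metis
qed

lemma linform_dvd_restr_zero:
  fixes lam :: "nat \<Rightarrow> 'a::field_char_0 \<times> 'a \<times> 'a"
  assumes fr: "frame lam E" and f: "f \<in> hom_forms t" and r: "line_restr f (E 1) (E 2) = 0"
  shows "\<exists>g \<in> hom_forms (t - 1). f = pmul (linform (lam 0)) g"
proof -
  have L: "lin_eval (lam 0) (E 1) = 0" "lin_eval (lam 1) (E 1) = 1" "lin_eval (lam 2) (E 1) = 0"
    "lin_eval (lam 0) (E 2) = 0" "lin_eval (lam 1) (E 2) = 0" "lin_eval (lam 2) (E 2) = 1"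
    using frame_lin_eval[OF fr] by auto
  obtain u where fu: "f = (\<Sum>m\<in>monoms t. scalef (u m) (frame_monom lam m))"
    using frame_monom_expansion[OF fr f] by blast
  have r12: "line_restr (frame_monom lam m) (E 1) (E 2) = (if fst m = 0 then monom 1 (snd (snd m)) else 0)" for m
    using L by (cases m) (simp add: line_restr_frame_monom x_power_monom one_pCons[symmetric])
  have "u m = 0" if m: "m \<in> monoms t" "fst m = 0" for m
  proof -
    obtain b c where bc: "m = (0, b, c)" using m(2) by (cases m) auto
    have "coeff (line_restr f (E 1) (E 2)) c = u m"
      unfolding fu bc using m(1)
      by (subst coeff_line_restr_expansion[where m' = "(0, b, c)", OF r12]) (auto simp: bc monoms_def)
    then show ?thesis using r by simp
  qed
  then show ?thesis unfolding fu by (rule frame_expansion_linform_dvd)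
qed

section \<open>Points on a line\<close>

lemma double_root:
  fixes p :: "'a::field poly"
  assumes "poly p x = 0" "poly (pderiv p) x = 0"
  shows "[:-x, 1:] ^ 2 dvd p"
proof -
  obtain q where q: "p = [:-x, 1:] * q" using assms(1) poly_eq_0_iff_dvd by blast
  have "pderiv p = [:-x, 1:] * pderiv q + q * pderiv [:-x, 1:]"
    unfolding q by (rule pderiv_mult)
  then have "poly q x = 0" using assms(2) by (simp add: pderiv_pCons)
  then obtain r where r: "q = [:-x, 1:] * r" using poly_eq_0_iff_dvd by blast
  have "p = [:-x, 1:] ^ 2 * r" unfolding q r by (simp only: power2_eq_square mult.assoc)
  then show ?thesis by (rule dvdI)
qed

lemma roots_dvd:
  fixes p :: "'a::field poly"
  assumes "finite S" "\<And>x. x \<in> S \<Longrightarrow> [:-x, 1:] ^ k dvd p"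
  shows "(\<Prod>x\<in>S. [:-x, 1:] ^ k) dvd p"
  using assms
proof (induction S rule: finite_induct)
  case empty
  then show ?case by simp
next
  case (insert y S)
  then obtain q where q: "p = (\<Prod>x\<in>S. [:-x, 1:] ^ k) * q" by blast
  show ?case
  proof (cases "p = 0")
    case False
    have nz: "(\<Prod>x\<in>S. [:-x, 1:] ^ k) \<noteq> (0 :: 'a poly)" "q \<noteq> 0"
      using False q insert(1) by auto
    have "poly (\<Prod>x\<in>S. [:-x, 1:] ^ k) y \<noteq> 0" using insert(1,2) by (simp add: poly_prod)
    then have "order y (\<Prod>x\<in>S. [:-x, 1:] ^ k) = 0" by (rule order_0I)
    then have "order y p = order y q" unfolding q using nz by (simp add: order_mult)
    moreover have "k \<le> order y p" using insert.prems False order_divides by blast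
    ultimately obtain r where "q = [:-y, 1:] ^ k * r" using order_divides by (metis dvdE)
    then show ?thesis using q insert(1,2) by (simp add: mult_ac)
  qed simp
qed

lemma degree_roots_prod:
  "finite S \<Longrightarrow> degree (\<Prod>x\<in>S. [:-x, 1:] ^ k :: 'a::field poly) = k * card S"
  by (subst degree_prod_sum_eq) (auto simp: degree_power_eq)

lemma coeff_1_pderiv: "coeff p (Suc 0) = poly (pderiv p) 0"
  by (simp add: poly_0_coeff_0 coeff_pderiv)

lemma eval_form_line_pt:
  "f \<in> hom_forms t \<Longrightarrow> P = scale3 a (line_pt A B x) \<Longrightarrow> eval_form f P = a ^ t * poly (line_restr f A B) x"
  by (simp add: eval_form_scale3 poly_line_restr)

lemma singular_at_line_double_root:
  fixes A B :: "'a::field_char_0 \<times> 'a \<times> 'a"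
  assumes f: "f \<in> hom_forms t" and a: "a \<noteq> 0" and P: "P = scale3 a (line_pt A B x)"
    and sing: "singular_at P f"
  shows "[:-x, 1:] ^ 2 dvd line_restr f A B"
proof (rule double_root)
  have "eval_form f P = 0" using sing unfolding singular_at_def by (metis coeff_0_line_restr)
  then show "poly (line_restr f A B) x = 0" using eval_form_line_pt[OF f P] a by simp
  text \<open>Along the line through \<open>P\<close> in direction \<open>B\<close> the restriction of \<open>f\<close> is a rescaled
    reparametrisation of the one along \<open>A + x B\<close>, so its linear coefficient is a multiple of the
    derivative at \<open>x\<close>.\<close>
  have e: "line_restr f P B = smult (a ^ t) (pcompose (line_restr f A B) [:x, 1/a:])"
  proof (rule poly_ext)
    fix y
    have "line_pt P B y = scale3 a (line_pt A B (x + y / a))"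
      using a by (cases A; cases B) (simp add: P line_pt_def field_simps)
    then show "poly (line_restr f P B) y = poly (smult (a ^ t) (pcompose (line_restr f A B) [:x, 1/a:])) y"
      by (simp add: poly_line_restr eval_form_scale3[OF f] poly_pcompose field_simps)
  qed
  have "coeff (line_restr f P v) 1 = 0" for v using sing unfolding singular_at_def by blast
  then have "0 = coeff (line_restr f P B) (Suc 0)" by simp
  also have "\<dots> = a ^ t * poly (pderiv (line_restr f A B)) x * (1 / a)"
    unfolding coeff_1_pderiv e by (simp add: pderiv_smult pderiv_pcompose poly_pcompose pderiv_pCons)
  finally show "poly (pderiv (line_restr f A B)) x = 0" using a by simp
qed

text \<open>A finite set \<open>X\<close> of pairwise non-proportional points on the line \<open>lam 0 = 0\<close>, none of them
  a multiple of \<open>E 2\<close>; each point of \<open>X\<close> is then a multiple of \<open>E 1 + x E 2\<close> for a unique affine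
  parameter \<open>x\<close>.\<close>

locale points_on_line =
  fixes lam E :: "nat \<Rightarrow> 'a::field_char_0 \<times> 'a \<times> 'a" and X :: "('a \<times> 'a \<times> 'a) set"
  assumes fr: "frame lam E" and finX: "finite X"
    and onL: "\<And>P. P \<in> X \<Longrightarrow> lin_eval (lam 0) P = 0"
    and a1: "\<And>P. P \<in> X \<Longrightarrow> lin_eval (lam 1) P \<noteq> 0"
    and np: "\<And>P Q. P \<in> X \<Longrightarrow> Q \<in> X \<Longrightarrow> P \<noteq> Q \<Longrightarrow> \<not> proportional P Q"
begin

definition line_param :: "'a \<times> 'a \<times> 'a \<Rightarrow> 'a" where
  "line_param P = lin_eval (lam 2) P / lin_eval (lam 1) P"

lemma line_param_point: "P \<in> X \<Longrightarrow> P = scale3 (lin_eval (lam 1) P) (line_pt (E 1) (E 2) (line_param P))"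
  unfolding line_param_def using on_line_param[OF fr onL a1] .

lemma inj_on_line_param: "inj_on line_param X"
proof (rule inj_onI, rule ccontr)
  fix P Q assume P: "P \<in> X" and Q: "Q \<in> X" and e: "line_param P = line_param Q" and ne: "P \<noteq> Q"
  let ?a = "lin_eval (lam 1) P" and ?b = "lin_eval (lam 1) Q"
  have "Q = scale3 ?b (line_pt (E 1) (E 2) (line_param P))" using line_param_point[OF Q] e by simp
  also have "\<dots> = scale3 (?b / ?a) P"
    using line_param_point[OF P] a1[OF P]
    by (cases "line_pt (E 1) (E 2) (line_param P)") (metis (no_types, lifting) divide_eq_eq mult.assoc scale3.simps)
  finally have "proportional P Q" using a1[OF Q] a1[OF P] by (metis proportional_scale3 divide_eq_0_iff)
  then show False using np[OF P Q ne] by blast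
qed

lemma card_line_param: "card (line_param ` X) = card X"
  using card_image[OF inj_on_line_param] .

lemma line_restr_divisible:
  assumes f: "f \<in> hom_forms t" and dvd: "\<And>P. P \<in> X \<Longrightarrow> [:- line_param P, 1:] ^ k dvd line_restr f (E 1) (E 2)"
  shows "\<exists>q. line_restr f (E 1) (E 2) = (\<Prod>x\<in>line_param ` X. [:-x, 1:] ^ k) * q \<and>
    (q = 0 \<or> k * card X + degree q \<le> t)"
proof -
  let ?p = "line_restr f (E 1) (E 2)" and ?D = "\<Prod>x\<in>line_param ` X. [:-x, 1:] ^ k"
  have "?D dvd ?p" using finX dvd by (intro roots_dvd) auto
  then obtain q where q: "?p = ?D * q" by blast
  have "k * card X + degree q \<le> t" if "q \<noteq> 0"
  proof -
    have "degree ?p = k * card X + degree q"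
      using q that finX by (simp add: degree_mult_eq degree_roots_prod card_line_param)
    then show ?thesis using degree_line_restr[OF f, of "E 1" "E 2"] by linarith
  qed
  then show ?thesis using q by blast
qed

lemma linform_dvd_singular:
  assumes f: "f \<in> hom_forms t" and sing: "\<And>P. P \<in> X \<Longrightarrow> singular_at P f" and t: "t < 2 * card X"
  shows "\<exists>g \<in> hom_forms (t - 1). f = pmul (linform (lam 0)) g"
proof (rule linform_dvd_restr_zero[OF fr f])
  obtain q where q: "line_restr f (E 1) (E 2) = (\<Prod>x\<in>line_param ` X. [:-x, 1:] ^ 2) * q"
    and "q = 0 \<or> 2 * card X + degree q \<le> t"
    using line_restr_divisible[OF f, of 2]
      singular_at_line_double_root[OF f a1 line_param_point sing] by blast
  with t show "line_restr f (E 1) (E 2) = 0" by auto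
qed

lemma line_restr_vanishing:
  assumes f: "f \<in> hom_forms t" and z: "\<And>P. P \<in> X \<Longrightarrow> eval_form f P = 0"
  shows "\<exists>q. line_restr f (E 1) (E 2) = (\<Prod>x\<in>line_param ` X. [:-x, 1:] ^ 1) * q \<and> degree q \<le> t - card X"
proof -
  have "poly (line_restr f (E 1) (E 2)) (line_param P) = 0" if "P \<in> X" for P
    using eval_form_line_pt[OF f line_param_point[OF that]] z[OF that] a1[OF that] by simp
  then obtain q where "line_restr f (E 1) (E 2) = (\<Prod>x\<in>line_param ` X. [:-x, 1:] ^ 1) * q"
    and "q = 0 \<or> card X + degree q \<le> t"
    using line_restr_divisible[OF f, of 1] by (auto simp: poly_eq_0_iff_dvd)
  then show ?thesis by auto
qed

end

section \<open>Dimension estimates for forms singular at given points\<close>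

text \<open>Univariate polynomials are embedded as forms in \<open>x0\<close> alone, so that the rank--nullity
  bound above applies to restriction maps.\<close>

definition embed_poly :: "'a::zero poly \<Rightarrow> expo \<Rightarrow> 'a" where
  "embed_poly p m = (case m of (a, b, c) \<Rightarrow> if b = 0 \<and> c = 0 then coeff p a else 0)"

lemma embed_poly_add: "embed_poly (p + q) = embed_poly p + embed_poly q"
  by (rule ext) (simp add: embed_poly_def split: prod.splits)

lemma embed_poly_smult: "embed_poly (smult c p) = scalef c (embed_poly p)"
  by (rule ext) (simp add: embed_poly_def scalef_apply split: prod.splits)

lemma embed_poly_zero [simp]: "embed_poly 0 = 0"
  by (rule ext) (simp add: embed_poly_def split: prod.splits)

lemma embed_poly_sum: "embed_poly (\<Sum>x\<in>A. g x) = (\<Sum>x\<in>A. embed_poly (g x))"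
proof (induction A rule: infinite_finite_induct)
  case (insert x F)
  then show ?case by (simp only: sum.insert[OF insert(1,2)] embed_poly_add)
qed simp_all

lemma embed_poly_eq_0: "embed_poly p = 0 \<Longrightarrow> p = 0"
proof (rule poly_eqI)
  fix n assume "embed_poly p = 0"
  then have "embed_poly p (n, 0, 0) = 0" by simp
  then show "coeff p n = coeff 0 n" by (simp add: embed_poly_def)
qed

definition hom_part :: "nat \<Rightarrow> (expo \<Rightarrow> 'a::zero) \<Rightarrow> expo \<Rightarrow> 'a" where
  "hom_part t f m = (if edeg m = t then f m else 0)"

lemma hom_part_hom: "hom_part t f \<in> hom_forms t"
  by (auto simp: hom_part_def hom_forms_def)

lemma hom_part_id: "f \<in> hom_forms t \<Longrightarrow> hom_part t f = f"
  by (rule ext) (auto simp: hom_part_def dest: hom_formsD)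

lemma hom_part_add: "hom_part t (f + g) = hom_part t f + hom_part t (g :: expo \<Rightarrow> 'a::comm_monoid_add)"
  by (rule ext) (simp add: hom_part_def)

lemma hom_part_scalef: "hom_part t (scalef c f) = scalef c (hom_part t f)"
  by (rule ext) (simp add: hom_part_def scalef_apply)

lemma line_restr_hom_part_add:
  "line_restr (hom_part t (f + g)) P v = line_restr (hom_part t f) P v + (line_restr (hom_part t g) P v :: 'a::field_char_0 poly)"
  by (simp add: hom_part_add line_restr_add hom_forms_finite_supp[OF hom_part_hom])

lemma line_restr_hom_part_scalef:
  "line_restr (hom_part t (scalef c f)) P v = smult c (line_restr (hom_part t f) P (v :: 'a::field_char_0 \<times> _))"
  by (simp add: hom_part_scalef line_restr_scalef hom_forms_finite_supp[OF hom_part_hom])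

text \<open>Restriction to the line \<open>A + x B\<close>, made linear on all coefficient functions by first
  projecting to degree \<open>t\<close>.\<close>

definition restr_map :: "nat \<Rightarrow> 'a::field_char_0 \<times> 'a \<times> 'a \<Rightarrow> 'a \<times> 'a \<times> 'a \<Rightarrow> (expo \<Rightarrow> 'a) \<Rightarrow> expo \<Rightarrow> 'a" where
  "restr_map t A B f = embed_poly (line_restr (hom_part t f) A B)"

lemma form_linear_restr_map: "form_linear (restr_map t A B)"
  unfolding form_linear_def restr_map_def
  by (simp add: line_restr_hom_part_add line_restr_hom_part_scalef embed_poly_add embed_poly_smult)

lemma restr_map_hom: "f \<in> hom_forms t \<Longrightarrow> restr_map t A B f = embed_poly (line_restr f A B)"
  by (simp add: restr_map_def hom_part_id)

lemma dim_embed_poly_multiples_le: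
  fixes D :: "'a::field poly"
  assumes "\<And>y. y \<in> T \<Longrightarrow> \<exists>q. y = embed_poly (D * q) \<and> degree q \<le> s"
  shows "vs.dim T \<le> Suc s"
proof -
  have "T \<subseteq> vs.span ((\<lambda>i. embed_poly (D * monom 1 i)) ` {..s})"
  proof
    fix y assume "y \<in> T"
    then obtain q where y: "y = embed_poly (D * q)" and q: "degree q \<le> s"
      using assms by blast
    have "D * q = (\<Sum>i\<le>s. D * monom (coeff q i) i)"
      by (subst poly_as_sum_of_monoms'[OF q, symmetric]) (simp add: sum_distrib_left)
    also have "\<dots> = (\<Sum>i\<le>s. smult (coeff q i) (D * monom 1 i))"
      by (rule sum.cong[OF refl]) (simp add: mult_smult_right[symmetric] smult_monom)
    finally have "y = (\<Sum>i\<le>s. scalef (coeff q i) (embed_poly (D * monom 1 i)))"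
      by (simp add: y embed_poly_sum embed_poly_smult)
    also have "\<dots> \<in> vs.span ((\<lambda>i. embed_poly (D * monom 1 i)) ` {..s})"
      by (intro vs.span_sum vs.span_scale vs.span_base) auto
    finally show "y \<in> vs.span ((\<lambda>i. embed_poly (D * monom 1 i)) ` {..s})" .
  qed
  then have "vs.dim T \<le> card ((\<lambda>i. embed_poly (D * monom 1 i)) ` {..s})"
    by (intro vs.dim_le_card) auto
  also have "\<dots> \<le> card {..s}" by (rule card_image_le) simp
  finally show ?thesis by simp
qed

lemma dim_restr_map_image_le:
  fixes D :: "'a::field_char_0 poly"
  assumes "S \<subseteq> hom_forms t" and "\<And>f. f \<in> S \<Longrightarrow> \<exists>q. line_restr f A B = D * q \<and> degree q \<le> s"
  shows "vs.dim (restr_map t A B ` S) \<le> Suc s"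
  using assms by (intro dim_embed_poly_multiples_le) (force simp: restr_map_hom)

lemma dim_sing_forms_insert:
  fixes P :: "'a::field_char_0 \<times> 'a \<times> 'a"
  assumes P: "nonzero3 P"
  shows "vs.dim (sing_forms Y t) \<le> vs.dim (sing_forms (insert P Y) t) + 3"
proof -
  obtain lam E where fr: "frame lam E" and E0: "E 0 = P"
    using frame_through_point[OF P] by blast
  define c0 where "c0 f = coeff (line_restr (hom_part t f) P (E 1)) 0" for f
  define c1 where "c1 f = coeff (line_restr (hom_part t f) P (E 1)) 1" for f
  define c2 where "c2 f = coeff (line_restr (hom_part t f) P (E 2)) 1" for f
  define psi where "psi f = embed_poly [:c0 f, c1 f, c2 f:]" for f
  have "form_linear psi"
    unfolding form_linear_def psi_def c0_def c1_def c2_def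
    by (simp add: line_restr_hom_part_add line_restr_hom_part_scalef flip: embed_poly_add embed_poly_smult)
  have "vs.dim (psi ` sing_forms Y t) \<le> Suc 2"
  proof (rule dim_embed_poly_multiples_le[where D = 1])
    fix y assume "y \<in> psi ` sing_forms Y t"
    then obtain f where "y = psi f" by blast
    then show "\<exists>q. y = embed_poly (1 * q) \<and> degree q \<le> 2"
      by (intro exI[of _ "[:c0 f, c1 f, c2 f:]"]) (simp add: psi_def degree_pCons_eq_if)
  qed
  then have img: "vs.dim (psi ` sing_forms Y t) \<le> 3" by simp
  have ker: "sing_forms Y t \<inter> {x. psi x = 0} \<subseteq> sing_forms (insert P Y) t"
  proof
    fix f assume f: "f \<in> sing_forms Y t \<inter> {x. psi x = 0}"
    have fh: "f \<in> hom_forms t" using f sing_forms_subset by blast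
    have "[:c0 f, c1 f, c2 f:] = 0"
      using f embed_poly_eq_0 unfolding psi_def by blast
    then have "c0 f = 0" "c1 f = 0" "c2 f = 0" by simp_all
    then have "f \<in> sq_point_ideal_deg P t"
      by (intro sq_point_ideal_deg_frameI[OF fr E0 fh]) (simp_all add: c0_def c1_def c2_def hom_part_id[OF fh])
    then have "f \<in> sing_forms {P} t" using sq_point_ideal_deg_sing_forms by blast
    then show "f \<in> sing_forms (insert P Y) t" using f by (simp add: sing_forms_def)
  qed
  have "vs.dim (sing_forms Y t) \<le> vs.dim (sing_forms Y t \<inter> {x. psi x = 0}) + vs.dim (psi ` sing_forms Y t)"
    by (rule rank_nullity_le[OF \<open>form_linear psi\<close> fin_dim_sing_forms subspace_sing_forms])
  also have "\<dots> \<le> vs.dim (sing_forms (insert P Y) t) + 3"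
    using dim_subset_fin_dim[OF ker fin_dim_sing_forms] img by linarith
  finally show ?thesis .
qed

lemma dim_hom_forms_le_sing_forms:
  fixes Y :: "('a::field_char_0 \<times> 'a \<times> 'a) set"
  assumes "finite Y" "\<And>P. P \<in> Y \<Longrightarrow> nonzero3 P"
  shows "vs.dim (hom_forms t :: (expo \<Rightarrow> 'a) set) \<le> vs.dim (sing_forms Y t) + 3 * card Y"
  using assms
proof (induction Y rule: finite_induct)
  case empty
  then show ?case by (simp add: sing_forms_empty)
next
  case (insert P Y)
  then show ?case using dim_sing_forms_insert[of P Y t] by simp
qed

text \<open>Passing from degree \<open>t\<close> to \<open>t + 1\<close>: multiplication by a linear form \<open>lam 0\<close> avoiding \<open>Y\<close>
  accounts for the forms vanishing on the line \<open>lam 0 = 0\<close>, and the restrictions to that line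
  of the others form a space of dimension at most \<open>s + 1\<close>.\<close>

lemma dim_sing_forms_Suc_le_factor:
  fixes lam :: "nat \<Rightarrow> 'a::field_char_0 \<times> 'a \<times> 'a"
  assumes fr: "frame lam E" and avoid: "\<And>P. P \<in> Y \<Longrightarrow> lin_eval (lam 0) P \<noteq> 0"
    and restr: "\<And>f. f \<in> sing_forms Y (Suc t) \<Longrightarrow> \<exists>q. line_restr f (E 1) (E 2) = D * q \<and> degree q \<le> s"
  shows "vs.dim (sing_forms Y (Suc t)) \<le> vs.dim (sing_forms Y t) + Suc s"
proof -
  let ?phi = "restr_map (Suc t) (E 1) (E 2)" and ?l = "linform (lam 0)"
  have ker: "sing_forms Y (Suc t) \<inter> {x. ?phi x = 0} \<subseteq> pmul ?l ` sing_forms Y t"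
  proof
    fix f assume f: "f \<in> sing_forms Y (Suc t) \<inter> {x. ?phi x = 0}"
    have fh: "f \<in> hom_forms (Suc t)" using f sing_forms_subset by blast
    have "line_restr f (E 1) (E 2) = 0" using f by (intro embed_poly_eq_0) (simp add: restr_map_hom[OF fh])
    then obtain g where g: "g \<in> hom_forms t" "f = pmul ?l g"
      using linform_dvd_restr_zero[OF fr fh] by auto
    have "singular_at P g" if "P \<in> Y" for P
    proof (rule singular_at_pmul_cancel[OF finite_supp_linform hom_forms_finite_supp[OF g(1)]])
      show "eval_form ?l P \<noteq> 0" using avoid[OF that] by (simp add: eval_linform)
      show "singular_at P (pmul ?l g)" using f that g(2) by (auto simp: sing_forms_def)
    qed
    then have "g \<in> sing_forms Y t" using g(1) by (auto simp: sing_forms_def)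
    then show "f \<in> pmul ?l ` sing_forms Y t" using g(2) by blast
  qed
  have "vs.dim (sing_forms Y (Suc t))
      \<le> vs.dim (sing_forms Y (Suc t) \<inter> {x. ?phi x = 0}) + vs.dim (?phi ` sing_forms Y (Suc t))"
    by (rule rank_nullity_le[OF form_linear_restr_map fin_dim_sing_forms subspace_sing_forms])
  moreover have "vs.dim (sing_forms Y (Suc t) \<inter> {x. ?phi x = 0}) \<le> vs.dim (sing_forms Y t)"
    using dim_subset_fin_dim[OF ker fin_dim_pmul_image[OF sing_forms_subset]]
      dim_pmul_image_le[OF sing_forms_subset] by (rule order.trans)
  moreover have "vs.dim (?phi ` sing_forms Y (Suc t)) \<le> Suc s"
    by (rule dim_restr_map_image_le[OF sing_forms_subset restr])
  ultimately show ?thesis by linarith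
qed

lemma exists_line_avoiding:
  fixes Y :: "('a::field_char_0 \<times> 'a \<times> 'a) set"
  assumes "finite Y" "\<And>P. P \<in> Y \<Longrightarrow> nonzero3 P"
  shows "\<exists>M. nonzero3 M \<and> (\<forall>P\<in>Y. lin_eval M P \<noteq> 0)"
proof -
  text \<open>Take \<open>M = (1, c, c\<^sup>2)\<close> with \<open>c\<close> not a root of any of the polynomials \<open>p0 + p1 x + p2 x\<^sup>2\<close>.\<close>
  define pp where "pp P = [:fst P, fst (snd P), snd (snd P):]" for P :: "'a \<times> 'a \<times> 'a"
  have nz: "pp P \<noteq> 0" if "P \<in> Y" for P
    using assms(2)[OF that] by (cases P) (auto simp: pp_def nonzero3_def)
  have "finite (\<Union>P\<in>Y. {x. poly (pp P) x = 0})"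
    using assms(1) nz poly_roots_finite by blast
  then obtain c where c: "c \<notin> (\<Union>P\<in>Y. {x. poly (pp P) x = 0})"
    using ex_new_if_finite[OF infinite_UNIV_char_0] by blast
  have "lin_eval (1, c, c^2) P \<noteq> 0" if "P \<in> Y" for P
    using c that by (cases P) (auto simp: pp_def algebra_simps power2_eq_square)
  moreover have "nonzero3 (1::'a, c, c^2)" by (simp add: nonzero3_def)
  ultimately show ?thesis by blast
qed

lemma dim_sing_forms_Suc_le:
  fixes Y :: "('a::field_char_0 \<times> 'a \<times> 'a) set"
  assumes "finite Y" "\<And>P. P \<in> Y \<Longrightarrow> nonzero3 P"
  shows "vs.dim (sing_forms Y (Suc t)) \<le> vs.dim (sing_forms Y t) + (t + 2)"
proof -
  obtain M where M: "nonzero3 M" "\<forall>P\<in>Y. lin_eval M P \<noteq> 0"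
    using exists_line_avoiding[OF assms] by blast
  obtain lam E where fr: "frame lam E" and l0: "lam 0 = M"
    using frame_with_line[OF M(1)] by blast
  have "vs.dim (sing_forms Y (Suc t)) \<le> vs.dim (sing_forms Y t) + Suc (Suc t)"
  proof (rule dim_sing_forms_Suc_le_factor[OF fr, where D = 1])
    show "lin_eval (lam 0) P \<noteq> 0" if "P \<in> Y" for P using M(2) that l0 by blast
    show "\<exists>q. line_restr f (E 1) (E 2) = 1 * q \<and> degree q \<le> Suc t" if "f \<in> sing_forms Y (Suc t)" for f
      using that sing_forms_subset degree_line_restr by fastforce
  qed
  then show ?thesis by simp
qed

lemma dim_sing_forms_Suc_le_multiple:
  fixes Y :: "('a::field_char_0 \<times> 'a \<times> 'a) set"
  assumes "finite Y" "\<And>P. P \<in> Y \<Longrightarrow> nonzero3 P"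
    and sub: "sing_forms Y (Suc t) \<subseteq> pmul (linform l) ` hom_forms t"
  shows "vs.dim (sing_forms Y (Suc t)) \<le> vs.dim (sing_forms Y t) + (t + 1)"
proof -
  obtain M where M: "nonzero3 M" "\<forall>P\<in>Y. lin_eval M P \<noteq> 0"
    using exists_line_avoiding[OF assms(1,2)] by blast
  obtain lam E where fr: "frame lam E" and l0: "lam 0 = M"
    using frame_with_line[OF M(1)] by blast
  have "vs.dim (sing_forms Y (Suc t)) \<le> vs.dim (sing_forms Y t) + Suc t"
  proof (rule dim_sing_forms_Suc_le_factor[OF fr, where D = "line_restr (linform l) (E 1) (E 2)"])
    show "lin_eval (lam 0) P \<noteq> 0" if "P \<in> Y" for P using M(2) that l0 by blast
    show "\<exists>q. line_restr f (E 1) (E 2) = line_restr (linform l) (E 1) (E 2) * q \<and> degree q \<le> t"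
      if f: "f \<in> sing_forms Y (Suc t)" for f
    proof -
      obtain g where g: "g \<in> hom_forms t" "f = pmul (linform l) g" using sub f by blast
      show ?thesis using g degree_line_restr[OF g(1), of "E 1" "E 2"]
        by (intro exI[of _ "line_restr g (E 1) (E 2)"])
          (simp add: line_restr_pmul finite_supp_linform hom_forms_finite_supp)
    qed
  qed
  then show ?thesis by simp
qed

lemma dim_sing_forms_low:
  fixes Y :: "('a::field_char_0 \<times> 'a \<times> 'a) set"
  assumes "P \<in> Y" "nonzero3 P" "t < 2"
  shows "vs.dim (sing_forms Y t) = 0"
proof -
  have "sing_forms Y t \<subseteq> vs.span {}"
  proof
    fix f assume "f \<in> sing_forms Y t"
    then have "f \<in> sq_point_ideal_deg P t"
      using singular_in_sq_point_ideal_deg[OF assms(2)] assms(1) by (auto simp: sing_forms_def)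
    then show "f \<in> vs.span {}" using assms(3) by (simp add: sq_point_ideal_deg_def)
  qed
  then show ?thesis using vs.dim_le_card[of _ "{}"] by simp
qed

section \<open>Forms singular at some points and vanishing at others\<close>

definition sing_vanish_forms ::
  "('a::field_char_0 \<times> 'a \<times> 'a) set \<Rightarrow> ('a \<times> 'a \<times> 'a) set \<Rightarrow> nat \<Rightarrow> (expo \<Rightarrow> 'a) set" where
  "sing_vanish_forms Y Z t = {g \<in> sing_forms Y t. \<forall>P\<in>Z. eval_form g P = 0}"

lemma sing_vanish_forms_subset: "sing_vanish_forms Y Z t \<subseteq> hom_forms t"
  using sing_forms_subset by (auto simp: sing_vanish_forms_def)

lemma subspace_sing_vanish_forms: "vs.subspace (sing_vanish_forms Y Z t)"
  using subspace_sing_forms[of Y t]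
  unfolding vs.subspace_def sing_vanish_forms_def
  by (auto simp: eval_form_add eval_form_scalef dest!: sing_forms_subset[THEN subsetD, THEN hom_forms_finite_supp])

context points_on_line
begin

lemma sing_forms_Un_subset:
  assumes off: "\<And>P. P \<in> Y \<Longrightarrow> lin_eval (lam 0) P \<noteq> 0" and t: "t < 2 * card X"
  shows "sing_forms (Y \<union> X) t \<subseteq> pmul (linform (lam 0)) ` sing_vanish_forms Y X (t - 1)"
proof
  fix f assume "f \<in> sing_forms (Y \<union> X) t"
  then have fh: "f \<in> hom_forms t" and sing: "\<And>P. P \<in> Y \<union> X \<Longrightarrow> singular_at P f"
    by (auto simp: sing_forms_def)
  obtain g where g: "g \<in> hom_forms (t - 1)" "f = pmul (linform (lam 0)) g"
    using linform_dvd_singular[OF fh _ t] sing by blast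
  have "singular_at P g" if "P \<in> Y" for P
  proof (rule singular_at_pmul_cancel[OF finite_supp_linform hom_forms_finite_supp[OF g(1)]])
    show "eval_form (linform (lam 0)) P \<noteq> 0" using off[OF that] by (simp add: eval_linform)
    show "singular_at P (pmul (linform (lam 0)) g)" using sing[of P] that g(2) by simp
  qed
  moreover have "eval_form g P = 0" if "P \<in> X" for P
  proof (rule singular_at_linform_pmul[OF hom_forms_finite_supp[OF g(1)]])
    show "lin_eval (lam 0) P = 0" by (rule onL[OF that])
    show "lin_eval (lam 0) (E 0) \<noteq> 0" using frame_lin_eval[OF fr, of 0 0] by simp
    show "singular_at P (pmul (linform (lam 0)) g)" using sing[of P] that g(2) by simp
  qed
  ultimately have "g \<in> sing_vanish_forms Y X (t - 1)"
    using g(1) by (auto simp: sing_vanish_forms_def sing_forms_def)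
  then show "f \<in> pmul (linform (lam 0)) ` sing_vanish_forms Y X (t - 1)" using g(2) by blast
qed

lemma dim_sing_vanish_forms_le:
  assumes off: "\<And>P. P \<in> Y \<Longrightarrow> lin_eval (lam 0) P \<noteq> 0"
  shows "vs.dim (sing_vanish_forms Y X t) \<le> vs.dim (sing_forms Y (t - 1)) + Suc (t - card X)"
proof -
  let ?J = "sing_vanish_forms Y X t" and ?phi = "restr_map t (E 1) (E 2)"
  have ker: "?J \<inter> {x. ?phi x = 0} \<subseteq> pmul (linform (lam 0)) ` sing_forms Y (t - 1)"
  proof
    fix g assume g: "g \<in> ?J \<inter> {x. ?phi x = 0}"
    have gh: "g \<in> hom_forms t" using g sing_vanish_forms_subset by blast
    have "line_restr g (E 1) (E 2) = 0"
      using g restr_map_hom[OF gh, of "E 1" "E 2"] by (intro embed_poly_eq_0) simp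
    then obtain h where h: "h \<in> hom_forms (t - 1)" "g = pmul (linform (lam 0)) h"
      using linform_dvd_restr_zero[OF fr gh] by auto
    have "singular_at P h" if "P \<in> Y" for P
    proof (rule singular_at_pmul_cancel[OF finite_supp_linform hom_forms_finite_supp[OF h(1)]])
      show "eval_form (linform (lam 0)) P \<noteq> 0" using off[OF that] by (simp add: eval_linform)
      show "singular_at P (pmul (linform (lam 0)) h)"
        using g that h(2) by (auto simp: sing_vanish_forms_def sing_forms_def)
    qed
    then have "h \<in> sing_forms Y (t - 1)" using h(1) by (auto simp: sing_forms_def)
    then show "g \<in> pmul (linform (lam 0)) ` sing_forms Y (t - 1)" using h(2) by blast
  qed
  have "vs.dim ?J \<le> vs.dim (?J \<inter> {x. ?phi x = 0}) + vs.dim (?phi ` ?J)"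
    by (rule rank_nullity_le[OF form_linear_restr_map
          fin_dim_subset[OF sing_vanish_forms_subset fin_dim_hom_forms] subspace_sing_vanish_forms])
  moreover have "vs.dim (?J \<inter> {x. ?phi x = 0}) \<le> vs.dim (sing_forms Y (t - 1))"
    using dim_subset_fin_dim[OF ker fin_dim_pmul_image[OF sing_forms_subset]]
      dim_pmul_image_le[OF sing_forms_subset] by (rule order.trans)
  moreover have "vs.dim (?phi ` ?J) \<le> Suc (t - card X)"
  proof (rule dim_restr_map_image_le[OF sing_vanish_forms_subset])
    fix g assume "g \<in> ?J"
    then show "\<exists>q. line_restr g (E 1) (E 2) = (\<Prod>x\<in>line_param ` X. [:-x, 1:] ^ 1) * q \<and> degree q \<le> t - card X"
      using sing_vanish_forms_subset by (intro line_restr_vanishing) (auto simp: sing_vanish_forms_def)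
  qed
  ultimately show ?thesis by linarith
qed

end

section \<open>Linear configurations\<close>

locale lin_config =
  fixes r :: nat and n :: "nat \<Rightarrow> nat" and L :: "nat \<Rightarrow> 'a::field_char_0 \<times> 'a \<times> 'a"
    and X :: "nat \<Rightarrow> ('a \<times> 'a \<times> 'a) set"
  assumes lc: "linear_configuration r n L X"
begin

lemma r_pos: "1 \<le> r"
  using lc by (simp add: linear_configuration_def)

lemma nonzero_line: "i < r \<Longrightarrow> nonzero3 (L i)"
  using lc by (simp add: linear_configuration_def)

lemma finite_points: "i < r \<Longrightarrow> finite (X i)"
  using lc by (simp add: linear_configuration_def)

lemma card_points: "i < r \<Longrightarrow> card (X i) = n i"
  using lc by (simp add: linear_configuration_def)

lemma nonzero_point: "i < r \<Longrightarrow> P \<in> X i \<Longrightarrow> nonzero3 P"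
  using lc by (simp add: linear_configuration_def)

lemma point_on_line: "i < r \<Longrightarrow> P \<in> X i \<Longrightarrow> lin_eval (L i) P = 0"
  using lc by (simp add: linear_configuration_def on_line_def)

lemma point_off_line: "i < r \<Longrightarrow> j < r \<Longrightarrow> i \<noteq> j \<Longrightarrow> P \<in> X i \<Longrightarrow> lin_eval (L j) P \<noteq> 0"
  using lc by (simp add: linear_configuration_def on_line_def)

lemma points_not_proportional:
  "i < r \<Longrightarrow> P \<in> X i \<Longrightarrow> Q \<in> X i \<Longrightarrow> P \<noteq> Q \<Longrightarrow> \<not> proportional P Q"
  using lc by (simp add: linear_configuration_def)

lemma n_less: "j < i \<Longrightarrow> i < r \<Longrightarrow> n j < n i"
proof (induction i)
  case (Suc i)
  then show ?case using lc by (cases "j = i") (auto simp: linear_configuration_def)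
qed simp

lemma Suc_le_n: "i < r \<Longrightarrow> Suc i \<le> n i"
proof (induction i)
  case 0
  then show ?case using lc by (simp add: linear_configuration_def)
next
  case (Suc i)
  then show ?case using n_less[of i "Suc i"] by simp
qed

lemma line_frame_of:
  assumes k: "k < r"
  obtains lam E where "points_on_line lam E (X k)" "lam 0 = L k"
proof -
  obtain lam E where "frame lam E" "lam 0 = L k" "\<forall>P\<in>X k. lin_eval (lam 1) P \<noteq> 0"
    using frame_for_line[OF nonzero_line[OF k] finite_points[OF k]] nonzero_point[OF k] point_on_line[OF k]
    by blast
  then have "points_on_line lam E (X k)"
    using finite_points[OF k] point_on_line[OF k] points_not_proportional[OF k] by unfold_locales auto
  then show ?thesis using that \<open>lam 0 = L k\<close> by blast
qed

definition pts_before :: "nat \<Rightarrow> ('a \<times> 'a \<times> 'a) set" where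
  "pts_before k = (\<Union>i<k. X i)"

lemma pts_before_Suc: "pts_before (Suc k) = pts_before k \<union> X k"
  by (auto simp: pts_before_def lessThan_Suc)

lemma finite_pts_before: "k \<le> r \<Longrightarrow> finite (pts_before k)"
  unfolding pts_before_def using finite_points by auto

lemma pts_before_nonzero:
  assumes "k \<le> r" "P \<in> pts_before k"
  shows "nonzero3 P"
proof -
  obtain i where "i < k" "P \<in> X i" using assms(2) by (auto simp: pts_before_def)
  then show ?thesis using nonzero_point[of i P] assms(1) by simp
qed

lemma pts_before_off_line:
  assumes "k < r" "P \<in> pts_before k"
  shows "lin_eval (L k) P \<noteq> 0"
proof -
  obtain i where "i < k" "P \<in> X i" using assms(2) by (auto simp: pts_before_def)
  then show ?thesis using point_off_line[of i k P] assms(1) by simp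
qed

lemma card_pts_before_Suc:
  assumes k: "k < r"
  shows "card (pts_before (Suc k)) = card (pts_before k) + n k"
proof -
  have "pts_before k \<inter> X k = {}"
    using pts_before_off_line[OF k] point_on_line[OF k] by fastforce
  then show ?thesis
    unfolding pts_before_Suc using k finite_pts_before[of k] finite_points card_points
    by (simp add: card_Un_disjoint)
qed

text \<open>The points on the first \<open>k\<close> lines impose independent conditions on forms of degree \<open>t\<close>:
  by \<open>dim_hom_forms_le_sing_forms\<close> this means \<open>h(t) = 3 |pts_before k|\<close>.\<close>

definition indep_conds :: "nat \<Rightarrow> nat \<Rightarrow> bool" where
  "indep_conds k t \<longleftrightarrow>
     vs.dim (sing_forms (pts_before k) t) + 3 * card (pts_before k) \<le> vs.dim (hom_forms t :: (expo \<Rightarrow> 'a) set)"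

lemma indep_conds_Suc:
  assumes "k \<le> r" "indep_conds k t"
  shows "indep_conds k (Suc t)"
  using dim_sing_forms_Suc_le[OF finite_pts_before pts_before_nonzero, OF assms(1) assms(1), of t]
    dim_hom_forms_Suc[of t, where 'a='a] assms(2)
  unfolding indep_conds_def by linarith

lemma indep_conds_first_line:
  assumes k: "k < r" and n1: "n k = 1"
  shows "indep_conds (Suc k) 1"
proof -
  have k0: "k = 0" using Suc_le_n[OF k] n1 by simp
  then have Y: "pts_before (Suc k) = X k" by (simp add: pts_before_def lessThan_Suc)
  obtain P where P: "P \<in> X k" using card_points[OF k] n1 by (metis card_1_singletonE insertI1)
  have "vs.dim (sing_forms (pts_before (Suc k)) 1) = 0"
    using P Y nonzero_point[OF k P] by (intro dim_sing_forms_low[of P]) auto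
  moreover have "vs.dim (hom_forms 1 :: (expo \<Rightarrow> 'a) set) = 3" using dim_hom_forms[of 1, where 'a='a] by simp
  ultimately show ?thesis unfolding indep_conds_def using Y card_points[OF k] n1 by simp
qed

text \<open>With \<open>d = 2 n\<^sub>k - 1\<close>: forms of degree \<open>d\<close> singular on the first \<open>k + 1\<close> lines are
  \<open>L\<^sub>k\<close> times forms of degree \<open>d - 1\<close> singular on the first \<open>k\<close> lines and vanishing on \<open>X\<^sub>k\<close>; these
  are controlled by their restriction to \<open>L\<^sub>k\<close> (at most \<open>n\<^sub>k - 1\<close> dimensions) and, modulo \<open>L\<^sub>k\<close>,
  by forms of degree \<open>d - 2\<close>.\<close>

lemma indep_conds_next_line:
  assumes k: "k < r" and n2: "2 \<le> n k" and IH: "indep_conds k (2 * n k - 3)"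
  shows "indep_conds (Suc k) (2 * n k - 1)"
proof -
  define d where "d = 2 * n k - 1"
  obtain lam E where pl: "points_on_line lam E (X k)" and l0: "lam 0 = L k"
    using line_frame_of[OF k] by blast
  interpret pl: points_on_line lam E "X k" by (rule pl)
  have off: "lin_eval (lam 0) P \<noteq> 0" if "P \<in> pts_before k" for P
    using pts_before_off_line[OF k that] l0 by simp
  have "vs.dim (sing_forms (pts_before (Suc k)) d) \<le> vs.dim (sing_vanish_forms (pts_before k) (X k) (d - 1))"
  proof -
    have "sing_forms (pts_before (Suc k)) d \<subseteq> pmul (linform (lam 0)) ` sing_vanish_forms (pts_before k) (X k) (d - 1)"
      unfolding pts_before_Suc using card_points[OF k] n2 d_def by (intro pl.sing_forms_Un_subset off) auto
    from dim_subset_fin_dim[OF this fin_dim_pmul_image[OF sing_vanish_forms_subset]]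
    show ?thesis using dim_pmul_image_le[OF sing_vanish_forms_subset] by (rule order.trans)
  qed
  also have "\<dots> \<le> vs.dim (sing_forms (pts_before k) (d - 1 - 1)) + Suc (d - 1 - card (X k))"
    by (rule pl.dim_sing_vanish_forms_le[OF off])
  finally have "vs.dim (sing_forms (pts_before (Suc k)) d) + 3 * card (pts_before (Suc k))
      \<le> vs.dim (sing_forms (pts_before k) (d - 1 - 1)) + 3 * card (pts_before k) + (2 * d + 1)"
    using card_pts_before_Suc[OF k] card_points[OF k] n2 unfolding d_def by linarith
  also have "\<dots> \<le> vs.dim (hom_forms (d - 1 - 1) :: (expo \<Rightarrow> 'a) set) + (2 * d + 1)"
  proof -
    have "d - 1 - 1 = 2 * n k - 3" by (simp add: d_def)
    with IH have "vs.dim (sing_forms (pts_before k) (d - 1 - 1)) + 3 * card (pts_before k)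
        \<le> vs.dim (hom_forms (d - 1 - 1) :: (expo \<Rightarrow> 'a) set)"
      unfolding indep_conds_def by simp
    then show ?thesis by linarith
  qed
  also have "\<dots> = vs.dim (hom_forms d :: (expo \<Rightarrow> 'a) set)"
  proof -
    have "d = Suc (Suc (d - 2))" using n2 d_def by simp
    then obtain e where "d = Suc (Suc e)" by blast
    then show ?thesis using dim_hom_forms_Suc[of e, where 'a='a] dim_hom_forms_Suc[of "Suc e", where 'a='a] by simp
  qed
  finally show ?thesis unfolding indep_conds_def d_def .
qed

lemma indep_conds_all: "k \<le> r \<Longrightarrow> k = 0 \<or> 2 * n (k - 1) \<le> Suc t \<Longrightarrow> indep_conds k t"
proof (induction k arbitrary: t)
  case 0
  then show ?case by (simp add: indep_conds_def pts_before_def sing_forms_empty)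
next
  case (Suc k)
  have k: "k < r" using Suc by simp
  have start: "indep_conds (Suc k) (2 * n k - 1)"
  proof (cases "n k = 1")
    case True
    then show ?thesis using indep_conds_first_line[OF k] by simp
  next
    case False
    then have n2: "2 \<le> n k" using Suc_le_n[OF k] by linarith
    have "k = 0 \<or> 2 * n (k - 1) \<le> Suc (2 * n k - 3)"
      using n_less[of "k - 1" k] k n2 by (cases k) auto
    then show ?thesis by (intro indep_conds_next_line[OF k n2] Suc.IH) (use k in auto)
  qed
  have "2 * n k - 1 \<le> t" using Suc by simp
  then show ?case
  proof (induction t rule: dec_induct)
    case (step t)
    then show ?case using indep_conds_Suc[of "Suc k" t] Suc.prems by simp
  qed (rule start)
qed

end

section \<open>The Hilbert function of the first infinitesimal neighbourhood\<close>

context lin_config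
begin

lemma hilb_fin_eq:
  "hilb_fin (pts_before r) t =
    int (vs.dim (hom_forms t :: (expo \<Rightarrow> 'a) set)) - int (vs.dim (sing_forms (pts_before r) t))"
  unfolding hilb_fin_def by (simp only: fin_ideal_deg_eq[OF pts_before_nonzero[OF order_refl]])

lemma hilb_fin_saturated:
  assumes "2 * n (r - 1) \<le> Suc t"
  shows "hilb_fin (pts_before r) t = 3 * int (card (pts_before r))"
proof -
  have "indep_conds r t" by (rule indep_conds_all) (use assms in auto)
  moreover have "vs.dim (hom_forms t :: (expo \<Rightarrow> 'a) set) \<le> vs.dim (sing_forms (pts_before r) t) + 3 * card (pts_before r)"
    by (rule dim_hom_forms_le_sing_forms[OF finite_pts_before pts_before_nonzero]) simp_all
  ultimately show ?thesis unfolding hilb_fin_eq indep_conds_def by linarith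
qed

lemma dhilb_fin_at_twice_last: "dhilb_fin (pts_before r) (2 * n (r - 1)) = 0"
proof -
  have "1 \<le> n (r - 1)" using Suc_le_n[of "r - 1"] r_pos by simp
  then show ?thesis
    unfolding dhilb_fin_def using hilb_fin_saturated[of "2 * n (r - 1)"] hilb_fin_saturated[of "2 * n (r - 1) - 1"]
    by simp
qed

text \<open>Below \<open>2 * n (r - 1)\<close> every form singular on the last line is a multiple of it, so the Hilbert
  function still increases.\<close>

lemma dhilb_fin_below_twice_last:
  assumes t: "t < 2 * n (r - 1)"
  shows "dhilb_fin (pts_before r) t \<noteq> 0"
proof (cases t)
  case 0
  have r1: "r - 1 < r" using r_pos by simp
  then obtain P where P: "P \<in> X (r - 1)"
    using card_points[OF r1] Suc_le_n[OF r1] by (metis card.empty ex_in_conv not_less_eq_eq zero_le)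
  then have PY: "P \<in> pts_before r" using r1 by (auto simp: pts_before_def)
  then have "vs.dim (sing_forms (pts_before r) 0) = 0"
    using dim_sing_forms_low[OF PY pts_before_nonzero[OF order_refl PY]] by simp
  moreover have "vs.dim (hom_forms 0 :: (expo \<Rightarrow> 'a) set) = 1" using dim_hom_forms[of 0, where 'a='a] by simp
  ultimately show ?thesis unfolding dhilb_fin_def hilb_fin_eq 0 by simp
next
  case (Suc s)
  have r1: "r - 1 < r" using r_pos by simp
  obtain lam E where pl: "points_on_line lam E (X (r - 1))" using line_frame_of[OF r1] by blast
  have "sing_forms (pts_before r) (Suc s) \<subseteq> pmul (linform (lam 0)) ` hom_forms s"
  proof
    fix f assume f: "f \<in> sing_forms (pts_before r) (Suc s)"
    have "X (r - 1) \<subseteq> pts_before r" using r1 by (auto simp: pts_before_def)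
    then have "f \<in> hom_forms (Suc s)" "\<And>P. P \<in> X (r - 1) \<Longrightarrow> singular_at P f"
      using f by (auto simp: sing_forms_def)
    moreover have "Suc s < 2 * card (X (r - 1))" using t Suc card_points[OF r1] by simp
    ultimately obtain g where "g \<in> hom_forms s" "f = pmul (linform (lam 0)) g"
      using points_on_line.linform_dvd_singular[OF pl] by fastforce
    then show "f \<in> pmul (linform (lam 0)) ` hom_forms s" by blast
  qed
  then have "vs.dim (sing_forms (pts_before r) (Suc s)) \<le> vs.dim (sing_forms (pts_before r) s) + (s + 1)"
    by (intro dim_sing_forms_Suc_le_multiple finite_pts_before pts_before_nonzero) simp_all
  then show ?thesis
    unfolding dhilb_fin_def Suc hilb_fin_eq using dim_hom_forms_Suc[of s, where 'a='a] by simp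
qed

end

theorem mainTheorem8:
  fixes r :: nat and n :: "nat \<Rightarrow> nat"
    and L :: "nat \<Rightarrow> 'a::field_char_0 \<times> 'a \<times> 'a"
    and X :: "nat \<Rightarrow> ('a \<times> 'a \<times> 'a) set"
  assumes "linear_configuration r n L X"
  shows "reg_fin (\<Union>i<r. X i) = 2 * n (r - 1)"
proof -
  interpret lin_config r n L X by (rule lin_config.intro[OF assms])
  show ?thesis
    unfolding reg_fin_def pts_before_def[symmetric]
  proof (rule Least_equality)
    show "dhilb_fin (pts_before r) (2 * n (r - 1)) = 0"
      by (rule dhilb_fin_at_twice_last)
    show "2 * n (r - 1) \<le> t" if "dhilb_fin (pts_before r) t = 0" for t
      using dhilb_fin_below_twice_last that not_le by blast
  qed
qed

end
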